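(* Let $\mathbb{R}$ be an EZ-category and $\phi:X\to Y$ a map of set-valued presheaves on $\mathbb{R}$. The following are equivalent: (i) for each object $r$ of $\mathbb{R}$, the relative latching map $X_r\cup_{L_r(X)}L_r(Y)\to Y_r$ is a free $\mathrm{Aut}(r)$-extension; (ii) $\phi$ is a monomorphism, and for each object $r$ and each non-degenerate element $y\in Y_r\setminus\phi(X)_r$, the isotropy group $\{g\in\mathrm{Aut}(r)\mid g^*(y)=y\}$ is trivial; (iii) for each $n\ge0$, the relative $n$-skeleton $\mathit{sk}_n(\phi)=X\cup_{\mathit{sk}_n(X)}\mathit{sk}_n(Y)$ is obtained from the relative $(n-1)$-skeleton $\mathit{sk}_{n-1}(\phi)$ by attaching (i.e. by a pushout along) a coproduct of boundary inclusions $\partial\mathbb{R}[r]\hookrightarrow\mathbb{R}[r]$ of representable presheaves with $d(r)=n$.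
   Context: An EZ-category is a small category $\mathbb{R}$ with a degree function $d:\mathrm{Ob}(\mathbb{R})\to\mathbb{N}$ such that (i) monomorphisms preserve (resp. strictly raise) the degree iff they are invertible (resp. non-invertible); (ii) every morphism factors as a split epimorphism followed by a monomorphism; (iii) any pair of split epimorphisms with common domain has an absolute pushout. Split epimorphisms are degeneracy operators, monomorphisms are face operators. $\mathbb{R}[r]=\mathbb{R}(-,r)$; an element $x\in X_r$ (a map $\mathbb{R}[r]\to X$) is degenerate if it factors through a non-invertible degeneracy $r\to s$, non-degenerate otherwise. For a presheaf $X$, $L_r(X)=\mathrm{colim}\,X_s$ over the category whose objects are the non-invertible degeneracies $u:r\to s$ and whose morphisms from $u$ to $u':r\to s'$ are $w:s\to s'$ with $u'=wu$; the map $L_r(X)\to X_r$ is induced by the $u^*$, and $\mathrm{Aut}(r)$ acts on everything. A map of $G$-sets $f:A\to B$ is a free $G$-extension if it is injective and $G$ acts freely on $B\setminus f(A)$. $\mathit{sk}_n(X)_r=\mathrm{colim}_{(r\to s),\,d(s)\le n}X_s$ (left Kan extension of the restriction to objects of degree $\le n$), with counit $\mathit{sk}_n(X)\to X$; $\mathit{sk}_{-1}(X)=\emptyset$. The formal boundary $\partial\mathbb{R}[r]\subseteq\mathbb{R}[r]$ is the subpresheaf of elements factoring through a non-invertible face operator $s\to r$. *)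

theory Defs
  imports Main
begin

record ('o,'m) cat =
  Ob  :: "'o set"
  Ar  :: "'m set"
  Dom :: "'m \<Rightarrow> 'o"
  Cod :: "'m \<Rightarrow> 'o"
  Cmp :: "'m \<Rightarrow> 'm \<Rightarrow> 'm"   (* Cmp C g f = g \<circ> f, defined when Cod f = Dom g *)
  Idt :: "'o \<Rightarrow> 'm"

definition category :: "('o,'m) cat \<Rightarrow> bool" where
  "category C \<longleftrightarrow>
     (\<forall>f\<in>Ar C. Dom C f \<in> Ob C \<and> Cod C f \<in> Ob C) \<and>
     (\<forall>a\<in>Ob C. Idt C a \<in> Ar C \<and> Dom C (Idt C a) = a \<and> Cod C (Idt C a) = a) \<and>
     (\<forall>f\<in>Ar C. \<forall>g\<in>Ar C. Cod C f = Dom C g \<longrightarrow>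
         Cmp C g f \<in> Ar C \<and> Dom C (Cmp C g f) = Dom C f \<and> Cod C (Cmp C g f) = Cod C g) \<and>
     (\<forall>f\<in>Ar C. Cmp C f (Idt C (Dom C f)) = f \<and> Cmp C (Idt C (Cod C f)) f = f) \<and>
     (\<forall>f\<in>Ar C. \<forall>g\<in>Ar C. \<forall>h\<in>Ar C. Cod C f = Dom C g \<longrightarrow> Cod C g = Dom C h \<longrightarrow>
         Cmp C h (Cmp C g f) = Cmp C (Cmp C h g) f)"

definition hom :: "('o,'m) cat \<Rightarrow> 'o \<Rightarrow> 'o \<Rightarrow> 'm set" where
  "hom C a b = {f \<in> Ar C. Dom C f = a \<and> Cod C f = b}"

definition iso :: "('o,'m) cat \<Rightarrow> 'm \<Rightarrow> bool" where
  "iso C f \<longleftrightarrow> f \<in> Ar C \<and> (\<exists>g\<in>Ar C. Dom C g = Cod C f \<and> Cod C g = Dom C f \<and>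
       Cmp C g f = Idt C (Dom C f) \<and> Cmp C f g = Idt C (Cod C f))"

definition mono :: "('o,'m) cat \<Rightarrow> 'm \<Rightarrow> bool" where
  "mono C f \<longleftrightarrow> f \<in> Ar C \<and> (\<forall>g\<in>Ar C. \<forall>h\<in>Ar C. Cod C g = Dom C f \<longrightarrow> Cod C h = Dom C f \<longrightarrow>
       Dom C g = Dom C h \<longrightarrow> Cmp C f g = Cmp C f h \<longrightarrow> g = h)"

definition split_epi :: "('o,'m) cat \<Rightarrow> 'm \<Rightarrow> bool" where
  "split_epi C f \<longleftrightarrow> f \<in> Ar C \<and> (\<exists>s\<in>Ar C. Dom C s = Cod C f \<and> Cod C s = Dom C f \<and>
       Cmp C f s = Idt C (Cod C f))"

definition Aut :: "('o,'m) cat \<Rightarrow> 'o \<Rightarrow> 'm set" where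
  "Aut C r = {g \<in> hom C r r. iso C g}"

definition eqcl :: "'a set \<Rightarrow> ('a \<times> 'a) set \<Rightarrow> ('a \<times> 'a) set" where
  "eqcl S R = Id_on S \<union> (R \<union> R\<inverse>)\<^sup>+"

text \<open>A commutative square A -f-> B, A -g-> C, B -h-> D, C -k-> D of sets is a pushout:
  the canonical map from the standard pushout (B + C)/~ to D is a bijection.\<close>
definition set_pushout ::
  "'a set \<Rightarrow> 'b set \<Rightarrow> 'c set \<Rightarrow> 'd set \<Rightarrow> ('a \<Rightarrow> 'b) \<Rightarrow> ('a \<Rightarrow> 'c) \<Rightarrow> ('b \<Rightarrow> 'd) \<Rightarrow> ('c \<Rightarrow> 'd) \<Rightarrow> bool" where
  "set_pushout A B C D f g h k \<longleftrightarrow>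
     (\<forall>a\<in>A. f a \<in> B \<and> g a \<in> C \<and> h (f a) = k (g a)) \<and>
     h ` B \<subseteq> D \<and> k ` C \<subseteq> D \<and> D \<subseteq> h ` B \<union> k ` C \<and>
     (\<forall>u\<in>B <+> C. \<forall>v\<in>B <+> C. case_sum h k u = case_sum h k v \<longrightarrow>
        (u, v) \<in> eqcl (B <+> C) {(Inl (f a), Inr (g a)) | a. a \<in> A})"

definition spo_rel :: "'b set \<Rightarrow> 'c set \<Rightarrow> 'a set \<Rightarrow> ('a \<Rightarrow> 'b) \<Rightarrow> ('a \<Rightarrow> 'c) \<Rightarrow> (('b + 'c) \<times> ('b + 'c)) set" where
  "spo_rel B C A f g = eqcl (B <+> C) {(Inl (f a), Inr (g a)) | a. a \<in> A}"

definition spo :: "'a set \<Rightarrow> 'b set \<Rightarrow> 'c set \<Rightarrow> ('a \<Rightarrow> 'b) \<Rightarrow> ('a \<Rightarrow> 'c) \<Rightarrow> ('b + 'c) set set" where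
  "spo A B C f g = (B <+> C) // spo_rel B C A f g"

text \<open>A commutative square e1: r -> s1, e2: r -> s2, f1: s1 -> t, f2: s2 -> t is an absolute
  pushout: it is preserved by the Yoneda embedding, i.e. every hom-functor hom(a,-) takes it
  to a pushout of sets (equivalently, it is preserved by every functor).\<close>
definition absolute_pushout :: "('o,'m) cat \<Rightarrow> 'm \<Rightarrow> 'm \<Rightarrow> 'm \<Rightarrow> 'm \<Rightarrow> bool" where
  "absolute_pushout C e1 e2 f1 f2 \<longleftrightarrow>
     e1 \<in> Ar C \<and> e2 \<in> Ar C \<and> f1 \<in> Ar C \<and> f2 \<in> Ar C \<and>
     Dom C e1 = Dom C e2 \<and> Dom C f1 = Cod C e1 \<and> Dom C f2 = Cod C e2 \<and> Cod C f1 = Cod C f2 \<and>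
     Cmp C f1 e1 = Cmp C f2 e2 \<and>
     (\<forall>a\<in>Ob C. set_pushout (hom C a (Dom C e1)) (hom C a (Cod C e1)) (hom C a (Cod C e2))
                 (hom C a (Cod C f1)) (Cmp C e1) (Cmp C e2) (Cmp C f1) (Cmp C f2))"

definition EZ_category :: "('o,'m) cat \<Rightarrow> ('o \<Rightarrow> nat) \<Rightarrow> bool" where
  "EZ_category C d \<longleftrightarrow> category C \<and>
     (\<forall>f. mono C f \<longrightarrow>
        (d (Dom C f) = d (Cod C f) \<longleftrightarrow> iso C f) \<and> (d (Dom C f) < d (Cod C f) \<longleftrightarrow> \<not> iso C f)) \<and>
     (\<forall>f\<in>Ar C. \<exists>e m. split_epi C e \<and> mono C m \<and> Cod C e = Dom C m \<and> f = Cmp C m e) \<and>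
     (\<forall>e1 e2. split_epi C e1 \<longrightarrow> split_epi C e2 \<longrightarrow> Dom C e1 = Dom C e2 \<longrightarrow>
        (\<exists>f1 f2. absolute_pushout C e1 e2 f1 f2))"

text \<open>A presheaf X: sets El X r for objects r, and for f: r -> s the restriction
  Act X f : El X s -> El X r (written f^* in the paper).\<close>
record ('o,'m,'x) psh =
  El  :: "'o \<Rightarrow> 'x set"
  Act :: "'m \<Rightarrow> 'x \<Rightarrow> 'x"

definition presheaf :: "('o,'m) cat \<Rightarrow> ('o,'m,'x) psh \<Rightarrow> bool" where
  "presheaf C X \<longleftrightarrow>
     (\<forall>f\<in>Ar C. \<forall>x\<in>El X (Cod C f). Act X f x \<in> El X (Dom C f)) \<and>
     (\<forall>a\<in>Ob C. \<forall>x\<in>El X a. Act X (Idt C a) x = x) \<and>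
     (\<forall>f\<in>Ar C. \<forall>g\<in>Ar C. Cod C f = Dom C g \<longrightarrow>
        (\<forall>x\<in>El X (Cod C g). Act X (Cmp C g f) x = Act X f (Act X g x)))"

definition psh_map :: "('o,'m) cat \<Rightarrow> ('o,'m,'x) psh \<Rightarrow> ('o,'m,'y) psh \<Rightarrow> ('o \<Rightarrow> 'x \<Rightarrow> 'y) \<Rightarrow> bool" where
  "psh_map C X Y \<phi> \<longleftrightarrow>
     (\<forall>a\<in>Ob C. \<forall>x\<in>El X a. \<phi> a x \<in> El Y a) \<and>
     (\<forall>f\<in>Ar C. \<forall>x\<in>El X (Cod C f). \<phi> (Dom C f) (Act X f x) = Act Y f (\<phi> (Cod C f) x))"

definition psh_mono :: "('o,'m) cat \<Rightarrow> ('o,'m,'x) psh \<Rightarrow> ('o \<Rightarrow> 'x \<Rightarrow> 'y) \<Rightarrow> bool" where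
  "psh_mono C X \<phi> \<longleftrightarrow> (\<forall>a\<in>Ob C. inj_on (\<phi> a) (El X a))"

text \<open>For a predicate P on arrows, the colimit of X_s over the category whose objects are the
  arrows u: r -> s with P u and whose morphisms u -> u' are w: s -> s' with u' = w u
  (and P u'), the functor sending u to X_s and w to w^*.\<close>
definition cgens :: "('o,'m) cat \<Rightarrow> ('m \<Rightarrow> bool) \<Rightarrow> ('o,'m,'x) psh \<Rightarrow> 'o \<Rightarrow> ('m \<times> 'x) set" where
  "cgens C P X r = {(f, x). f \<in> Ar C \<and> Dom C f = r \<and> P f \<and> x \<in> El X (Cod C f)}"

definition crel :: "('o,'m) cat \<Rightarrow> ('m \<Rightarrow> bool) \<Rightarrow> ('o,'m,'x) psh \<Rightarrow> 'o \<Rightarrow> (('m \<times> 'x) \<times> ('m \<times> 'x)) set" where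
  "crel C P X r = {((f, Act X w x), (Cmp C w f, x)) | f w x.
      f \<in> Ar C \<and> Dom C f = r \<and> P f \<and> w \<in> Ar C \<and> Dom C w = Cod C f \<and> P (Cmp C w f) \<and>
      x \<in> El X (Cod C w)}"

definition crelq :: "('o,'m) cat \<Rightarrow> ('m \<Rightarrow> bool) \<Rightarrow> ('o,'m,'x) psh \<Rightarrow> 'o \<Rightarrow> (('m \<times> 'x) \<times> ('m \<times> 'x)) set" where
  "crelq C P X r = eqcl (cgens C P X r) (crel C P X r)"

definition ccolim :: "('o,'m) cat \<Rightarrow> ('m \<Rightarrow> bool) \<Rightarrow> ('o,'m,'x) psh \<Rightarrow> 'o \<Rightarrow> ('m \<times> 'x) set set" where
  "ccolim C P X r = cgens C P X r // crelq C P X r"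

text \<open>The map colim -> X_r induced by the u^*.\<close>
definition ceval :: "('o,'m,'x) psh \<Rightarrow> ('m \<times> 'x) set \<Rightarrow> 'x" where
  "ceval X K = the_elem ((\<lambda>(f, x). Act X f x) ` K)"

text \<open>The map of colimits induced by a presheaf map phi.\<close>
definition cmap :: "('o,'m) cat \<Rightarrow> ('m \<Rightarrow> bool) \<Rightarrow> ('o,'m,'y) psh \<Rightarrow> ('o \<Rightarrow> 'x \<Rightarrow> 'y) \<Rightarrow> 'o
                     \<Rightarrow> ('m \<times> 'x) set \<Rightarrow> ('m \<times> 'y) set" where
  "cmap C P Y \<phi> r K = the_elem ((\<lambda>(f, x). crelq C P Y r `` {(f, \<phi> (Cod C f) x)}) ` K)"

definition ndeg :: "('o,'m) cat \<Rightarrow> 'm \<Rightarrow> bool" where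
  "ndeg C u \<longleftrightarrow> split_epi C u \<and> \<not> iso C u"

definition Lr :: "('o,'m) cat \<Rightarrow> ('o,'m,'x) psh \<Rightarrow> 'o \<Rightarrow> ('m \<times> 'x) set set" where
  "Lr C X r = ccolim C (ndeg C) X r"

definition rel_latch_obj :: "('o,'m) cat \<Rightarrow> ('o,'m,'x) psh \<Rightarrow> ('o,'m,'y) psh \<Rightarrow> ('o \<Rightarrow> 'x \<Rightarrow> 'y) \<Rightarrow> 'o
     \<Rightarrow> ('x + ('m \<times> 'y) set) set set" where
  "rel_latch_obj C X Y \<phi> r = spo (Lr C X r) (El X r) (Lr C Y r) (ceval X) (cmap C (ndeg C) Y \<phi> r)"

definition rel_latch_map :: "('o,'m,'y) psh \<Rightarrow> ('o \<Rightarrow> 'x \<Rightarrow> 'y) \<Rightarrow> 'o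
     \<Rightarrow> ('x + ('m \<times> 'y) set) set \<Rightarrow> 'y" where
  "rel_latch_map Y \<phi> r K = the_elem (case_sum (\<phi> r) (ceval Y) ` K)"

definition free_ext :: "'g set \<Rightarrow> 'g \<Rightarrow> ('g \<Rightarrow> 'b \<Rightarrow> 'b) \<Rightarrow> 'a set \<Rightarrow> 'b set \<Rightarrow> ('a \<Rightarrow> 'b) \<Rightarrow> bool" where
  "free_ext G e act A B f \<longleftrightarrow> f ` A \<subseteq> B \<and> inj_on f A \<and>
     (\<forall>b\<in>B - f ` A. \<forall>g\<in>G. act g b = b \<longrightarrow> g = e)"

definition degenerate :: "('o,'m) cat \<Rightarrow> ('o,'m,'x) psh \<Rightarrow> 'o \<Rightarrow> 'x \<Rightarrow> bool" where
  "degenerate C X r x \<longleftrightarrow>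
     (\<exists>u x'. ndeg C u \<and> Dom C u = r \<and> x' \<in> El X (Cod C u) \<and> x = Act X u x')"

definition skP :: "('o,'m) cat \<Rightarrow> ('o \<Rightarrow> nat) \<Rightarrow> int \<Rightarrow> 'm \<Rightarrow> bool" where
  "skP C d n f \<longleftrightarrow> int (d (Cod C f)) \<le> n"

text \<open>sk_n(X)_r (for n = -1 this is empty).\<close>
definition sk :: "('o,'m) cat \<Rightarrow> ('o \<Rightarrow> nat) \<Rightarrow> int \<Rightarrow> ('o,'m,'x) psh \<Rightarrow> 'o \<Rightarrow> ('m \<times> 'x) set set" where
  "sk C d n X r = ccolim C (skP C d n) X r"

definition relsk_rel :: "('o,'m) cat \<Rightarrow> ('o \<Rightarrow> nat) \<Rightarrow> int \<Rightarrow> ('o,'m,'x) psh \<Rightarrow> ('o,'m,'y) psh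
     \<Rightarrow> ('o \<Rightarrow> 'x \<Rightarrow> 'y) \<Rightarrow> 'o \<Rightarrow> (('x + ('m \<times> 'y) set) \<times> ('x + ('m \<times> 'y) set)) set" where
  "relsk_rel C d n X Y \<phi> r =
     spo_rel (El X r) (sk C d n Y r) (sk C d n X r) (ceval X) (cmap C (skP C d n) Y \<phi> r)"

definition relsk :: "('o,'m) cat \<Rightarrow> ('o \<Rightarrow> nat) \<Rightarrow> int \<Rightarrow> ('o,'m,'x) psh \<Rightarrow> ('o,'m,'y) psh
     \<Rightarrow> ('o \<Rightarrow> 'x \<Rightarrow> 'y) \<Rightarrow> 'o \<Rightarrow> ('x + ('m \<times> 'y) set) set set" where
  "relsk C d n X Y \<phi> r =
     spo (sk C d n X r) (El X r) (sk C d n Y r) (ceval X) (cmap C (skP C d n) Y \<phi> r)"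

definition sk_act :: "('o,'m) cat \<Rightarrow> ('m \<Rightarrow> bool) \<Rightarrow> ('o,'m,'y) psh \<Rightarrow> 'm
     \<Rightarrow> ('m \<times> 'y) set \<Rightarrow> ('m \<times> 'y) set" where
  "sk_act C P Y a L = the_elem ((\<lambda>(f, y). crelq C P Y (Dom C a) `` {(Cmp C f a, y)}) ` L)"

definition relsk_act :: "('o,'m) cat \<Rightarrow> ('o \<Rightarrow> nat) \<Rightarrow> int \<Rightarrow> ('o,'m,'x) psh \<Rightarrow> ('o,'m,'y) psh
     \<Rightarrow> ('o \<Rightarrow> 'x \<Rightarrow> 'y) \<Rightarrow> 'm \<Rightarrow> ('x + ('m \<times> 'y) set) set \<Rightarrow> ('x + ('m \<times> 'y) set) set" where
  "relsk_act C d n X Y \<phi> a K =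
     the_elem ((\<lambda>u. relsk_rel C d n X Y \<phi> (Dom C a) ``
        {case u of Inl x \<Rightarrow> Inl (Act X a x) | Inr L \<Rightarrow> Inr (sk_act C (skP C d n) Y a L)}) ` K)"

text \<open>The canonical map sk_{n-1}(phi)_r -> sk_n(phi)_r.\<close>
definition relsk_incl :: "('o,'m) cat \<Rightarrow> ('o \<Rightarrow> nat) \<Rightarrow> int \<Rightarrow> ('o,'m,'x) psh \<Rightarrow> ('o,'m,'y) psh
     \<Rightarrow> ('o \<Rightarrow> 'x \<Rightarrow> 'y) \<Rightarrow> 'o \<Rightarrow> ('x + ('m \<times> 'y) set) set \<Rightarrow> ('x + ('m \<times> 'y) set) set" where
  "relsk_incl C d n X Y \<phi> r K =
     the_elem ((\<lambda>u. relsk_rel C d n X Y \<phi> r ``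
        {case u of Inl x \<Rightarrow> Inl x
                 | Inr L \<Rightarrow> Inr (the_elem ((\<lambda>p. crelq C (skP C d n) Y r `` {p}) ` L))}) ` K)"

definition bd :: "('o,'m) cat \<Rightarrow> 'o \<Rightarrow> 'o \<Rightarrow> 'm set" where
  "bd C r s = {f \<in> hom C s r. \<exists>m g. mono C m \<and> \<not> iso C m \<and> Cod C m = r \<and>
                  g \<in> hom C s (Dom C m) \<and> f = Cmp C m g}"

end

theory Submission
  imports Defs
begin

text \<open>
  Everything can be computed inside \<open>Y\<close>. Once \<open>\<phi>\<close> is mono, the canonical maps from the relative
  latching object and from the relative skeleta \<open>sk\<^sub>n(\<phi>)\<^sub>s\<close> to \<open>Y\<^sub>s\<close> are injective; their images are
  \<open>\<phi>(X\<^sub>s)\<close> together with the degenerate elements, resp. the elements factoring through an object of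
  degree at most \<open>n\<close>. This rests on the Eilenberg--Zilber lemma: every element is a degeneracy of a
  nondegenerate one, uniquely up to an automorphism, which is where the absolute pushouts are used.
  Hence \<open>sk\<^sub>n(\<phi>)\<close> arises from \<open>sk\<^sub>n\<^sub>-\<^sub>1(\<phi>)\<close> by adding the degeneracies of the nondegenerate elements
  of degree \<open>n\<close> outside \<open>X\<close>, and these are freely generated by one representable cell per
  \<open>Aut\<close>-orbit exactly when all isotropy groups are trivial. Conversely, injectivity of \<open>\<phi>\<close> and
  triviality of isotropy are read off from the attaching pushouts, descending along the skeleta.
\<close>

section \<open>Equivalence closures and pushouts of sets\<close>

lemma eqcl_equiv: "R \<subseteq> S \<times> S \<Longrightarrow> equiv S (eqcl S R)"
proof -
  assume R: "R \<subseteq> S \<times> S"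
  have sub: "(R \<union> R\<inverse>)\<^sup>+ \<subseteq> S \<times> S"
    by (rule trancl_subset_Sigma) (use R in auto)
  have "sym ((R \<union> R\<inverse>)\<^sup>+)"
    by (rule sym_trancl) (auto simp: sym_def)
  then show ?thesis
    using sub unfolding equiv_def eqcl_def refl_on_def sym_def trans_def
    by (auto intro: trancl_trans)
qed

lemma eqcl_invariant:
  assumes "\<And>u v. (u, v) \<in> R \<Longrightarrow> V u = V v" and "(x, y) \<in> eqcl S R"
  shows "V x = V y"
proof -
  have "V x = V y" if "(x, y) \<in> (R \<union> R\<inverse>)\<^sup>+"
    using that by (induction rule: trancl_induct) (use assms(1) in \<open>auto dest: sym\<close>)
  then show ?thesis using assms(2) unfolding eqcl_def by auto
qed

lemma eqcl_base: "(x, y) \<in> R \<Longrightarrow> (x, y) \<in> eqcl S R"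
  unfolding eqcl_def by auto

lemma eqcl_refl: "x \<in> S \<Longrightarrow> (x, x) \<in> eqcl S R"
  unfolding eqcl_def by auto

lemma eqcl_sym: "R \<subseteq> S \<times> S \<Longrightarrow> (x, y) \<in> eqcl S R \<Longrightarrow> (y, x) \<in> eqcl S R"
  using eqcl_equiv by (metis equiv_def symD)

lemma eqcl_trans: "R \<subseteq> S \<times> S \<Longrightarrow> (x, y) \<in> eqcl S R \<Longrightarrow> (y, z) \<in> eqcl S R \<Longrightarrow> (x, z) \<in> eqcl S R"
  using eqcl_equiv by (metis equiv_def transD)

lemma eqcl_in: "R \<subseteq> S \<times> S \<Longrightarrow> (x, y) \<in> eqcl S R \<Longrightarrow> x \<in> S \<and> y \<in> S"
  using eqcl_equiv by (metis equiv_class_eq_iff)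

lemma the_elem_class:
  assumes "equiv S Q" "x \<in> S" "\<And>u v. (u, v) \<in> Q \<Longrightarrow> F u = F v"
  shows "the_elem (F ` (Q `` {x})) = F x"
proof -
  have "F ` (Q `` {x}) = {F x}"
  proof
    show "F ` (Q `` {x}) \<subseteq> {F x}" using assms(3) by auto
    show "{F x} \<subseteq> F ` (Q `` {x})" using equiv_class_self[OF assms(1,2)] by blast
  qed
  then show ?thesis by simp
qed

lemma spo_rel_sub: "\<forall>a\<in>A. f a \<in> B \<and> g a \<in> C \<Longrightarrow>
   {(Inl (f a), Inr (g a)) | a. a \<in> A} \<subseteq> (B <+> C) \<times> (B <+> C)"
  by auto

lemma spo_equiv: "\<forall>a\<in>A. f a \<in> B \<and> g a \<in> C \<Longrightarrow> equiv (B <+> C) (spo_rel B C A f g)"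
  unfolding spo_rel_def by (rule eqcl_equiv[OF spo_rel_sub])

lemma spo_related: "a \<in> A \<Longrightarrow> (Inl (f a), Inr (g a)) \<in> spo_rel B C A f g"
  unfolding spo_rel_def by (rule eqcl_base) blast

lemma spoE:
  assumes "K \<in> spo A B C f g"
  obtains u where "u \<in> B <+> C" "K = spo_rel B C A f g `` {u}"
  using assms unfolding spo_def by (auto elim!: quotientE)

lemma spo_classI: "u \<in> B <+> C \<Longrightarrow> spo_rel B C A f g `` {u} \<in> spo A B C f g"
  unfolding spo_def by (rule quotientI)

lemma spo_map_class:
  assumes m: "\<forall>a\<in>A. f a \<in> B \<and> g a \<in> C" and FG: "\<And>a. a \<in> A \<Longrightarrow> \<Phi> (Inl (f a)) = \<Phi> (Inr (g a))"
    and u: "u \<in> B <+> C"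
  shows "the_elem (\<Phi> ` (spo_rel B C A f g `` {u})) = \<Phi> u"
proof (rule the_elem_class[OF spo_equiv[OF m] u])
  fix p q assume pq: "(p, q) \<in> spo_rel B C A f g"
  show "\<Phi> p = \<Phi> q"
    by (rule eqcl_invariant[OF _ pq[unfolded spo_rel_def]]) (use FG in auto)
qed

lemma spo_case_sum_class:
  assumes "\<forall>a\<in>A. f a \<in> B \<and> g a \<in> C" and "\<And>a. a \<in> A \<Longrightarrow> F (f a) = G (g a)"
    and "u \<in> B <+> C"
  shows "the_elem (case_sum F G ` (spo_rel B C A f g `` {u})) = case_sum F G u"
  using assms by (intro spo_map_class) auto

lemma spo_case_sum_inj:
  assumes m: "\<forall>a\<in>A. f a \<in> B \<and> g a \<in> C" and FG: "\<And>a. a \<in> A \<Longrightarrow> F (f a) = G (g a)"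
    and iF: "inj_on F B" and iG: "inj_on G C"
    and cross: "\<And>b c. b \<in> B \<Longrightarrow> c \<in> C \<Longrightarrow> F b = G c \<Longrightarrow> \<exists>a\<in>A. b = f a \<and> c = g a"
  shows "inj_on (\<lambda>K. the_elem (case_sum F G ` K)) (spo A B C f g)"
proof (rule inj_onI)
  fix K K' assume K: "K \<in> spo A B C f g" and K': "K' \<in> spo A B C f g"
    and eq: "the_elem (case_sum F G ` K) = the_elem (case_sum F G ` K')"
  obtain u where u: "u \<in> B <+> C" "K = spo_rel B C A f g `` {u}" using spoE K by blast
  obtain v where v: "v \<in> B <+> C" "K' = spo_rel B C A f g `` {v}" using spoE K' by blast
  have uv: "case_sum F G u = case_sum F G v"
    using eq u v spo_case_sum_class[where F=F and G=G, OF m FG] by simp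
  have eqv: "equiv (B <+> C) (spo_rel B C A f g)" by (rule spo_equiv[OF m])
  have cross_rel: "(Inl b, Inr c) \<in> spo_rel B C A f g"
    if bc: "b \<in> B" "c \<in> C" "F b = G c" for b c
  proof -
    obtain a where "a \<in> A" "b = f a" "c = g a" using cross[OF bc] by blast
    then show ?thesis using spo_related[of a A f g B C] by simp
  qed
  have "(u, v) \<in> spo_rel B C A f g"
  proof (cases u; cases v)
    fix b b' assume "u = Inl b" "v = Inl b'"
    then show ?thesis using u(1) v(1) uv inj_onD[OF iF] equiv_class_eq_iff[OF eqv] by auto
  next
    fix b c assume "u = Inl b" "v = Inr c"
    then show ?thesis using u(1) v(1) uv cross_rel by auto
  next
    fix c b assume "u = Inr c" "v = Inl b"
    then show ?thesis using u(1) v(1) uv cross_rel equiv_class_eq_iff[OF eqv] by auto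
  next
    fix c c' assume "u = Inr c" "v = Inr c'"
    then show ?thesis using u(1) v(1) uv inj_onD[OF iG] equiv_class_eq_iff[OF eqv] by auto
  qed
  then show "K = K'" using u v equiv_class_eq[OF eqv] by simp
qed

lemma spo_inl_inj:
  fixes f :: "'a \<Rightarrow> 'b" and g :: "'a \<Rightarrow> 'c"
  assumes det: "\<And>a a'. a \<in> A \<Longrightarrow> a' \<in> A \<Longrightarrow> g a = g a' \<Longrightarrow> f a = f a'"
    and rel: "(Inl b, Inl b') \<in> eqcl S {(Inl (f a), Inr (g a)) | a. a \<in> A}"
  shows "b = b'"
proof -
  define V :: "'b + 'c \<Rightarrow> 'b + 'c" where "V u = (case u of Inl b \<Rightarrow> Inl b
     | Inr c \<Rightarrow> (if \<exists>a\<in>A. g a = c then Inl (f (SOME a. a \<in> A \<and> g a = c)) else Inr c))" for u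
  have "V (Inl b) = V (Inl b')"
  proof (rule eqcl_invariant[OF _ rel])
    fix u v :: "'b + 'c" assume "(u, v) \<in> {(Inl (f a), Inr (g a)) | a. a \<in> A}"
    then obtain a where a: "a \<in> A" "u = Inl (f a)" "v = Inr (g a)" by blast
    have "(SOME a'. a' \<in> A \<and> g a' = g a) \<in> A \<and> g (SOME a'. a' \<in> A \<and> g a' = g a) = g a"
      by (rule someI[of _ a]) (use a in auto)
    then have "f (SOME a'. a' \<in> A \<and> g a' = g a) = f a" using det a(1) by blast
    then show "V u = V v" using a unfolding V_def by auto
  qed
  then show ?thesis unfolding V_def by simp
qed

lemma eqcl_inr_free:
  assumes "c \<notin> g ` A" and rel: "(Inr c, v) \<in> eqcl S {(Inl (f a), Inr (g a)) | a. a \<in> A}"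
  shows "v = Inr c"
proof -
  have inv: "\<And>u v. (u, v) \<in> {(Inl (f a), Inr (g a)) | a. a \<in> A} \<Longrightarrow> (u = Inr c) = (v = Inr c)"
    using assms(1) by auto
  from eqcl_invariant[where V="\<lambda>u. u = Inr c", OF inv rel] show ?thesis by simp
qed

lemma set_pushout_h_inj:
  assumes sp: "set_pushout A B C D f g h k" and ginj: "inj_on g A"
    and b: "b \<in> B" "b' \<in> B" "h b = h b'"
  shows "b = b'"
proof -
  have all: "\<forall>u\<in>B <+> C. \<forall>v\<in>B <+> C. case_sum h k u = case_sum h k v \<longrightarrow>
        (u, v) \<in> eqcl (B <+> C) {(Inl (f a), Inr (g a)) | a. a \<in> A}"
    using sp unfolding set_pushout_def by blast
  have "(Inl b, Inl b') \<in> eqcl (B <+> C) {(Inl (f a), Inr (g a)) | a. a \<in> A}"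
    by (rule all[rule_format]) (use b in auto)
  then show ?thesis by (rule spo_inl_inj[rotated]) (use ginj in \<open>auto dest: inj_onD\<close>)
qed

lemma set_pushout_k_free:
  assumes sp: "set_pushout A B C D f g h k"
    and c: "c \<in> C" "c' \<in> C" "k c = k c'" "c \<notin> g ` A"
  shows "c = c'"
proof -
  have all: "\<forall>u\<in>B <+> C. \<forall>v\<in>B <+> C. case_sum h k u = case_sum h k v \<longrightarrow>
        (u, v) \<in> eqcl (B <+> C) {(Inl (f a), Inr (g a)) | a. a \<in> A}"
    using sp unfolding set_pushout_def by blast
  have "(Inr c, Inr c') \<in> eqcl (B <+> C) {(Inl (f a), Inr (g a)) | a. a \<in> A}"
    by (rule all[rule_format]) (use c in auto)
  then show ?thesis using eqcl_inr_free c(4) by fastforce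
qed

lemma set_pushout_commutes:
  "set_pushout A B C D f g h k \<Longrightarrow> a \<in> A \<Longrightarrow> f a \<in> B \<and> g a \<in> C \<and> h (f a) = k (g a)"
  unfolding set_pushout_def by blast

lemma set_pushout_jointly_surj: "set_pushout A B C D f g h k \<Longrightarrow> D \<subseteq> h ` B \<union> k ` C"
  unfolding set_pushout_def by blast

lemma set_pushout_along_subset:
  assumes AC: "A \<subseteq> C" and comm: "\<forall>a\<in>A. f a \<in> B \<and> h (f a) = k a"
    and hB: "h ` B \<subseteq> D" and kC: "k ` C \<subseteq> D" and surj: "D \<subseteq> h ` B \<union> k ` C"
    and inj: "inj_on h B"
    and hk: "\<And>b c. b \<in> B \<Longrightarrow> c \<in> C \<Longrightarrow> h b = k c \<Longrightarrow> c \<in> A \<and> f c = b"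
    and kk: "\<And>c c'. c \<in> C \<Longrightarrow> c' \<in> C \<Longrightarrow> k c = k c' \<Longrightarrow> c = c' \<or> c \<in> A \<and> c' \<in> A \<and> f c = f c'"
  shows "set_pushout A B C D f (\<lambda>c. c) h k"
proof -
  let ?S = "B <+> C" and ?R = "{(Inl (f a), Inr a) | a. a \<in> A}"
  have sub: "?R \<subseteq> ?S \<times> ?S" using AC comm by auto
  have glue: "(Inl b, Inr c) \<in> eqcl ?S ?R" if "b \<in> B" "c \<in> C" "h b = k c" for b c
    using hk[OF that] by (intro eqcl_base) auto
  have "(u, v) \<in> eqcl ?S ?R" if u: "u \<in> ?S" and v: "v \<in> ?S" and uv: "case_sum h k u = case_sum h k v" for u v
  proof (cases u; cases v)
    fix b b' assume uv': "u = Inl b" "v = Inl b'"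
    then have "b = b'" using u v uv inj_onD[OF inj] by auto
    then show ?thesis using uv' u by (simp add: eqcl_refl)
  next
    fix b c assume "u = Inl b" "v = Inr c"
    then show ?thesis using u v uv glue by auto
  next
    fix c b assume uv': "u = Inr c" "v = Inl b"
    then have "(Inl b, Inr c) \<in> eqcl ?S ?R" using u v uv glue by auto
    then show ?thesis using uv' eqcl_sym[OF sub] by simp
  next
    fix c c' assume uv': "u = Inr c" "v = Inr c'"
    then have "c = c' \<or> c \<in> A \<and> c' \<in> A \<and> f c = f c'" using u v uv kk by auto
    then show ?thesis
    proof
      assume "c = c'" then show ?thesis using uv' u by (simp add: eqcl_refl)
    next
      assume cc': "c \<in> A \<and> c' \<in> A \<and> f c = f c'"
      then have "(Inl (f c), Inr c) \<in> eqcl ?S ?R" "(Inl (f c), Inr c') \<in> eqcl ?S ?R"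
        by (auto intro!: eqcl_base)
      then show ?thesis using uv' eqcl_sym[OF sub] eqcl_trans[OF sub] by blast
    qed
  qed
  then show ?thesis unfolding set_pushout_def using AC comm hB kC surj by auto
qed

section \<open>Categories and presheaves\<close>

lemma act_el[intro,simp]: "presheaf C Y \<Longrightarrow> f \<in> Ar C \<Longrightarrow> y \<in> El Y (Cod C f) \<Longrightarrow> Act Y f y \<in> El Y (Dom C f)"
  unfolding presheaf_def by blast
lemma act_id[simp]: "presheaf C Y \<Longrightarrow> a \<in> Ob C \<Longrightarrow> y \<in> El Y a \<Longrightarrow> Act Y (Idt C a) y = y"
  unfolding presheaf_def by blast
lemma act_cmp: "presheaf C Y \<Longrightarrow> f \<in> Ar C \<Longrightarrow> g \<in> Ar C \<Longrightarrow> Cod C f = Dom C g \<Longrightarrow> y \<in> El Y (Cod C g) \<Longrightarrow>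
   Act Y (Cmp C g f) y = Act Y f (Act Y g y)"
  unfolding presheaf_def by blast

lemma split_epi_iso_of_nondegenerate:
  assumes "split_epi C e" "w \<in> El Y (Cod C e)" "\<not> degenerate C Y (Dom C e) (Act Y e w)"
  shows "iso C e"
  using assms unfolding degenerate_def ndeg_def by blast

locale small_category =
  fixes C :: "('o,'m) cat"
  assumes category: "category C"
begin

lemma ar_dom[intro,simp]: "f \<in> Ar C \<Longrightarrow> Dom C f \<in> Ob C"
  and ar_cod[intro,simp]: "f \<in> Ar C \<Longrightarrow> Cod C f \<in> Ob C"
  and idt_ar[intro,simp]: "a \<in> Ob C \<Longrightarrow> Idt C a \<in> Ar C"
  and idt_dom[simp]: "a \<in> Ob C \<Longrightarrow> Dom C (Idt C a) = a"
  and idt_cod[simp]: "a \<in> Ob C \<Longrightarrow> Cod C (Idt C a) = a"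
  and cmp_ar[intro,simp]: "f \<in> Ar C \<Longrightarrow> g \<in> Ar C \<Longrightarrow> Cod C f = Dom C g \<Longrightarrow> Cmp C g f \<in> Ar C"
  and cmp_dom[simp]: "f \<in> Ar C \<Longrightarrow> g \<in> Ar C \<Longrightarrow> Cod C f = Dom C g \<Longrightarrow> Dom C (Cmp C g f) = Dom C f"
  and cmp_cod[simp]: "f \<in> Ar C \<Longrightarrow> g \<in> Ar C \<Longrightarrow> Cod C f = Dom C g \<Longrightarrow> Cod C (Cmp C g f) = Cod C g"
  and cmp_idr[simp]: "f \<in> Ar C \<Longrightarrow> Dom C f = a \<Longrightarrow> Cmp C f (Idt C a) = f"
  and cmp_idl[simp]: "f \<in> Ar C \<Longrightarrow> Cod C f = a \<Longrightarrow> Cmp C (Idt C a) f = f"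
  using category unfolding category_def by blast+

lemma cmp_assoc:
  "f \<in> Ar C \<Longrightarrow> g \<in> Ar C \<Longrightarrow> h \<in> Ar C \<Longrightarrow> Cod C f = Dom C g \<Longrightarrow> Cod C g = Dom C h \<Longrightarrow>
   Cmp C h (Cmp C g f) = Cmp C (Cmp C h g) f"
  using category unfolding category_def by blast

lemma cmp_retraction_cancel:
  assumes "a \<in> Ar C" "b \<in> Ar C" "Cod C b = Dom C a" "Cmp C a b = Idt C (Dom C b)"
    and "h \<in> Ar C" "Cod C h = Dom C b"
  shows "Cmp C a (Cmp C b h) = h"
  using assms by (simp add: cmp_assoc)

lemma mono_ar: "mono C m \<Longrightarrow> m \<in> Ar C"
  unfolding mono_def by blast

lemma mono_cancel: "mono C m \<Longrightarrow> g \<in> Ar C \<Longrightarrow> h \<in> Ar C \<Longrightarrow> Cod C g = Dom C m \<Longrightarrow> Cod C h = Dom C m \<Longrightarrow>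
       Dom C g = Dom C h \<Longrightarrow> Cmp C m g = Cmp C m h \<Longrightarrow> g = h"
  unfolding mono_def by blast

lemma section_mono:
  assumes "r \<in> Ar C" "s \<in> Ar C" "Cod C s = Dom C r" "Cmp C r s = Idt C (Dom C s)"
  shows "mono C s"
  unfolding mono_def
proof (intro conjI assms(2) ballI impI)
  fix h k assume h: "h \<in> Ar C" "k \<in> Ar C" "Cod C h = Dom C s" "Cod C k = Dom C s" "Cmp C s h = Cmp C s k"
  have "h = Cmp C r (Cmp C s h)" using cmp_retraction_cancel[OF assms h(1,3)] ..
  also have "\<dots> = k" using h(5) cmp_retraction_cancel[OF assms h(2,4)] by simp
  finally show "h = k" .
qed

lemma iso_ar: "iso C f \<Longrightarrow> f \<in> Ar C"
  unfolding iso_def by blast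

lemma idt_iso: "a \<in> Ob C \<Longrightarrow> iso C (Idt C a)"
  unfolding iso_def by (intro conjI idt_ar bexI[of _ "Idt C a"]) auto

lemma iso_inv:
  assumes "iso C f"
  obtains g where "g \<in> Ar C" "Dom C g = Cod C f" "Cod C g = Dom C f"
     "Cmp C g f = Idt C (Dom C f)" "Cmp C f g = Idt C (Cod C f)" "iso C g"
proof -
  obtain g where g: "g \<in> Ar C" "Dom C g = Cod C f" "Cod C g = Dom C f"
     "Cmp C g f = Idt C (Dom C f)" "Cmp C f g = Idt C (Cod C f)" and f: "f \<in> Ar C"
    using assms unfolding iso_def by blast
  have "iso C g" unfolding iso_def using g f by auto
  then show ?thesis using that g by blast
qed

lemma iso_mono:
  assumes "iso C f"
  shows "mono C f"
proof -
  obtain g where "g \<in> Ar C" "Dom C g = Cod C f" "Cmp C g f = Idt C (Dom C f)"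
    using iso_inv[OF assms] by blast
  then show ?thesis using section_mono[of g f] iso_ar[OF assms] by simp
qed

lemma iso_split_epi: "iso C f \<Longrightarrow> split_epi C f"
  unfolding iso_def split_epi_def by blast

lemma split_epi_ar: "split_epi C f \<Longrightarrow> f \<in> Ar C"
  unfolding split_epi_def by blast

lemma split_epi_section:
  assumes "split_epi C e"
  obtains s where "s \<in> Ar C" "Dom C s = Cod C e" "Cod C s = Dom C e" "Cmp C e s = Idt C (Cod C e)"
    "mono C s"
proof -
  obtain s where s: "s \<in> Ar C" "Dom C s = Cod C e" "Cod C s = Dom C e" "Cmp C e s = Idt C (Cod C e)"
    and e: "e \<in> Ar C" using assms unfolding split_epi_def by blast
  then have "mono C s" using section_mono[of e s] by simp
  then show ?thesis using that s by blast
qed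

lemma mono_split_epi_iso:
  assumes m: "mono C m" and s: "s \<in> Ar C" "Dom C s = Cod C m" "Cod C s = Dom C m"
    and ms: "Cmp C m s = Idt C (Cod C m)"
  shows "iso C m"
proof -
  have mA: "m \<in> Ar C" using m mono_ar by blast
  have "Cmp C m (Cmp C s m) = Cmp C (Cmp C m s) m" using mA s by (simp add: cmp_assoc)
  also have "\<dots> = Cmp C m (Idt C (Dom C m))" using ms mA by simp
  finally have "Cmp C s m = Idt C (Dom C m)"
    by (rule mono_cancel[OF m, rotated -1]) (use mA s in simp_all)
  then show ?thesis unfolding iso_def using mA s ms by blast
qed

lemma iso_cmp:
  assumes "iso C f" "iso C g" "Cod C f = Dom C g"
  shows "iso C (Cmp C g f)"
proof -
  obtain f' where f': "f' \<in> Ar C" "Dom C f' = Cod C f" "Cod C f' = Dom C f"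
     "Cmp C f' f = Idt C (Dom C f)" "Cmp C f f' = Idt C (Cod C f)" using iso_inv assms(1) by blast
  obtain g' where g': "g' \<in> Ar C" "Dom C g' = Cod C g" "Cod C g' = Dom C g"
     "Cmp C g' g = Idt C (Dom C g)" "Cmp C g g' = Idt C (Cod C g)" using iso_inv assms(2) by blast
  have f: "f \<in> Ar C" and g: "g \<in> Ar C" using assms iso_ar by auto
  have "Cmp C (Cmp C f' g') (Cmp C g f) = Cmp C f' (Cmp C g' (Cmp C g f))"
    using f g f' g' assms(3) by (intro cmp_assoc[symmetric]) auto
  also have "\<dots> = Idt C (Dom C f)"
    using f g f' g' assms(3) cmp_retraction_cancel[of g' g f] by simp
  finally have left: "Cmp C (Cmp C f' g') (Cmp C g f) = Idt C (Dom C f)" .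
  have "Cmp C (Cmp C g f) (Cmp C f' g') = Cmp C g (Cmp C f (Cmp C f' g'))"
    using f g f' g' assms(3) by (intro cmp_assoc[symmetric]) auto
  also have "\<dots> = Idt C (Cod C g)"
    using f g f' g' assms(3) cmp_retraction_cancel[of f f' g'] by simp
  finally have right: "Cmp C (Cmp C g f) (Cmp C f' g') = Idt C (Cod C g)" .
  show ?thesis unfolding iso_def
    using f g f' g' assms(3) left right by (intro conjI cmp_ar bexI[of _ "Cmp C f' g'"]) auto
qed

lemma split_epi_cmp:
  assumes "split_epi C e" "split_epi C e'" "Cod C e = Dom C e'"
  shows "split_epi C (Cmp C e' e)"
proof -
  obtain s where s: "s \<in> Ar C" "Dom C s = Cod C e" "Cod C s = Dom C e" "Cmp C e s = Idt C (Cod C e)"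
    using split_epi_section assms(1) by blast
  obtain s' where s': "s' \<in> Ar C" "Dom C s' = Cod C e'" "Cod C s' = Dom C e'" "Cmp C e' s' = Idt C (Cod C e')"
    using split_epi_section assms(2) by blast
  have e: "e \<in> Ar C" "e' \<in> Ar C" using assms split_epi_ar by auto
  have "Cmp C (Cmp C e' e) (Cmp C s s') = Cmp C e' (Cmp C e (Cmp C s s'))"
    using e s s' assms(3) by (intro cmp_assoc[symmetric]) auto
  also have "\<dots> = Idt C (Cod C e')"
    using e s s' assms(3) cmp_retraction_cancel[of e s s'] by simp
  finally show ?thesis unfolding split_epi_def using e s s' assms(3)
    by (intro conjI cmp_ar bexI[of _ "Cmp C s s'"]) auto
qed

lemma split_epi_right_factor:
  assumes "split_epi C (Cmp C f e)" "e \<in> Ar C" "f \<in> Ar C" "Cod C e = Dom C f"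
  shows "split_epi C f"
proof -
  obtain s where s: "s \<in> Ar C" "Dom C s = Cod C f" "Cod C s = Dom C e" "Cmp C (Cmp C f e) s = Idt C (Cod C f)"
    using split_epi_section[OF assms(1)] assms(2-4) by auto
  then have "Cmp C f (Cmp C e s) = Idt C (Cod C f)" using assms(2-4) by (simp add: cmp_assoc)
  then show ?thesis unfolding split_epi_def using assms(2-4) s
    by (intro conjI bexI[of _ "Cmp C e s"]) auto
qed

lemma hom_precomp: "f \<in> hom C s t \<Longrightarrow> a \<in> Ar C \<Longrightarrow> Cod C a = s \<Longrightarrow> Cmp C f a \<in> hom C (Dom C a) t"
  unfolding hom_def by auto

lemma Idt_in_Aut: "r \<in> Ob C \<Longrightarrow> Idt C r \<in> Aut C r"
  unfolding Aut_def hom_def using idt_iso by auto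

lemma crel_sub: assumes X: "presheaf C X" shows "crel C P X r \<subseteq> cgens C P X r \<times> cgens C P X r"
proof
  fix p assume "p \<in> crel C P X r"
  then obtain f w x where p: "p = ((f, Act X w x), (Cmp C w f, x))" "f \<in> Ar C" "Dom C f = r" "P f" "w \<in> Ar C"
     "Dom C w = Cod C f" "P (Cmp C w f)" "x \<in> El X (Cod C w)"
    unfolding crel_def by blast
  have "Act X w x \<in> El X (Cod C f)" using act_el[OF X p(5) p(8)] p(6) by simp
  then show "p \<in> cgens C P X r \<times> cgens C P X r" using p unfolding cgens_def by auto
qed

lemma crelq_equiv: "presheaf C X \<Longrightarrow> equiv (cgens C P X r) (crelq C P X r)"
  unfolding crelq_def by (rule eqcl_equiv[OF crel_sub])

lemma crel_in_crelq: "presheaf C X \<Longrightarrow> f \<in> Ar C \<Longrightarrow> Dom C f = r \<Longrightarrow> P f \<Longrightarrow> w \<in> Ar C \<Longrightarrow>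
   Dom C w = Cod C f \<Longrightarrow> P (Cmp C w f) \<Longrightarrow> x \<in> El X (Cod C w) \<Longrightarrow>
   ((f, Act X w x), (Cmp C w f, x)) \<in> crelq C P X r"
  unfolding crelq_def by (rule eqcl_base) (unfold crel_def, blast)

lemma crelq_sym: "presheaf C X \<Longrightarrow> (p, q) \<in> crelq C P X r \<Longrightarrow> (q, p) \<in> crelq C P X r"
  using crelq_equiv by (metis equiv_def symD)
lemma crelq_trans: "presheaf C X \<Longrightarrow> (p, q) \<in> crelq C P X r \<Longrightarrow> (q, s) \<in> crelq C P X r \<Longrightarrow> (p, s) \<in> crelq C P X r"
  using crelq_equiv by (metis equiv_def transD)
lemma crelq_in: "presheaf C X \<Longrightarrow> (p, q) \<in> crelq C P X r \<Longrightarrow> p \<in> cgens C P X r \<and> q \<in> cgens C P X r"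
  unfolding crelq_def using eqcl_in[OF crel_sub] by blast

lemma crelq_val:
  assumes X: "presheaf C X" and pq: "(p, q) \<in> crelq C P X r"
  shows "(\<lambda>(f, x). Act X f x) p = (\<lambda>(f, x). Act X f x) q"
proof (rule eqcl_invariant[OF _ pq[unfolded crelq_def]])
  fix u v assume "(u, v) \<in> crel C P X r"
  then obtain f w x where p: "u = (f, Act X w x)" "v = (Cmp C w f, x)" "f \<in> Ar C" "Dom C f = r" "P f" "w \<in> Ar C"
     "Dom C w = Cod C f" "P (Cmp C w f)" "x \<in> El X (Cod C w)"
    unfolding crel_def by blast
  show "(\<lambda>(f, x). Act X f x) u = (\<lambda>(f, x). Act X f x) v" using p act_cmp[OF X, of f w x] by simp
qed

lemma ccolimE:
  assumes "K \<in> ccolim C P X r"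
  obtains f x where "(f, x) \<in> cgens C P X r" "K = crelq C P X r `` {(f, x)}"
  using assms unfolding ccolim_def by (auto elim!: quotientE)

lemma class_in_ccolim: "p \<in> cgens C P X r \<Longrightarrow> crelq C P X r `` {p} \<in> ccolim C P X r"
  unfolding ccolim_def by (rule quotientI)

lemma ceval_class:
  assumes X: "presheaf C X" and p: "(f, x) \<in> cgens C P X r"
  shows "ceval X (crelq C P X r `` {(f, x)}) = Act X f x"
  unfolding ceval_def
  by (rule the_elem_class[OF crelq_equiv[OF X] p, of "\<lambda>(f, x). Act X f x", simplified])
     (use crelq_val[OF X] in auto)

lemma ceval_mem:
  assumes X: "presheaf C X" and K: "K \<in> ccolim C P X r"
  shows "ceval X K \<in> El X r"
proof -
  obtain f x where p: "(f, x) \<in> cgens C P X r" "K = crelq C P X r `` {(f, x)}" using ccolimE K by blast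
  then show ?thesis using ceval_class[OF X p(1)] act_el[OF X] unfolding cgens_def by auto
qed

lemma cmap_class:
  assumes X: "presheaf C X" and Y: "presheaf C Y" and phi: "psh_map C X Y \<phi>"
    and p: "(f, x) \<in> cgens C P X r"
  shows "cmap C P Y \<phi> r (crelq C P X r `` {(f, x)}) = crelq C P Y r `` {(f, \<phi> (Cod C f) x)}"
proof -
  have F: "(\<lambda>(f, x). crelq C P Y r `` {(f, \<phi> (Cod C f) x)}) u = (\<lambda>(f, x). crelq C P Y r `` {(f, \<phi> (Cod C f) x)}) v"
    if uv: "(u, v) \<in> crelq C P X r" for u v
  proof (rule eqcl_invariant[OF _ uv[unfolded crelq_def]])
    fix u v assume "(u, v) \<in> crel C P X r"
    then obtain f w x where q: "u = (f, Act X w x)" "v = (Cmp C w f, x)" "f \<in> Ar C" "Dom C f = r" "P f" "w \<in> Ar C"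
       "Dom C w = Cod C f" "P (Cmp C w f)" "x \<in> El X (Cod C w)"
      unfolding crel_def by blast
    have nat: "\<phi> (Cod C f) (Act X w x) = Act Y w (\<phi> (Cod C w) x)"
      using phi q unfolding psh_map_def by metis
    have phx: "\<phi> (Cod C w) x \<in> El Y (Cod C w)" using phi q unfolding psh_map_def by blast
    have "((f, Act Y w (\<phi> (Cod C w) x)), (Cmp C w f, \<phi> (Cod C w) x)) \<in> crelq C P Y r"
      by (rule crel_in_crelq[OF Y q(3-8) phx])
    then have "crelq C P Y r `` {(f, Act Y w (\<phi> (Cod C w) x))} = crelq C P Y r `` {(Cmp C w f, \<phi> (Cod C w) x)}"
      using equiv_class_eq[OF crelq_equiv[OF Y]] by blast
    then show "(\<lambda>(f, x). crelq C P Y r `` {(f, \<phi> (Cod C f) x)}) u = (\<lambda>(f, x). crelq C P Y r `` {(f, \<phi> (Cod C f) x)}) v"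
      using q nat by simp
  qed
  show ?thesis unfolding cmap_def
    by (rule the_elem_class[OF crelq_equiv[OF X] p, of "\<lambda>(f, x). crelq C P Y r `` {(f, \<phi> (Cod C f) x)}", simplified])
       (use F in auto)
qed

lemma cgens_phi: "psh_map C X Y \<phi> \<Longrightarrow> (f, x) \<in> cgens C P X r \<Longrightarrow> (f, \<phi> (Cod C f) x) \<in> cgens C P Y r"
  unfolding cgens_def psh_map_def by auto

lemma cmap_mem:
  assumes X: "presheaf C X" and Y: "presheaf C Y" and phi: "psh_map C X Y \<phi>"
    and K: "K \<in> ccolim C P X r"
  shows "cmap C P Y \<phi> r K \<in> ccolim C P Y r"
proof -
  obtain f x where p: "(f, x) \<in> cgens C P X r" "K = crelq C P X r `` {(f, x)}" using ccolimE K by blast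
  show ?thesis using cmap_class[OF X Y phi p(1)] p(2) class_in_ccolim[OF cgens_phi[OF phi p(1)]] by simp
qed

lemma ceval_cmap:
  assumes X: "presheaf C X" and Y: "presheaf C Y" and phi: "psh_map C X Y \<phi>"
    and K: "K \<in> ccolim C P X r"
  shows "ceval Y (cmap C P Y \<phi> r K) = \<phi> r (ceval X K)"
proof -
  obtain f x where p: "(f, x) \<in> cgens C P X r" "K = crelq C P X r `` {(f, x)}" using ccolimE K by blast
  have fA: "f \<in> Ar C" "Dom C f = r" "x \<in> El X (Cod C f)" using p(1) unfolding cgens_def by auto
  have "ceval Y (cmap C P Y \<phi> r K) = Act Y f (\<phi> (Cod C f) x)"
    using cmap_class[OF X Y phi p(1)] p(2) ceval_class[OF Y cgens_phi[OF phi p(1)]] by simp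
  also have "\<dots> = \<phi> r (Act X f x)" using phi fA unfolding psh_map_def by metis
  also have "\<dots> = \<phi> r (ceval X K)" using ceval_class[OF X p(1)] p(2) by simp
  finally show ?thesis .
qed

end

section \<open>EZ-categories and the Eilenberg--Zilber lemma\<close>

locale ez_cat =
  fixes C :: "('o,'m) cat" and d :: "'o \<Rightarrow> nat"
  assumes EZ: "EZ_category C d"

sublocale ez_cat \<subseteq> small_category C
  using EZ by unfold_locales (simp add: EZ_category_def)

context ez_cat
begin

lemma deg_mono_iso: "mono C m \<Longrightarrow> d (Dom C m) = d (Cod C m) \<longleftrightarrow> iso C m"
  using EZ unfolding EZ_category_def by blast

lemma deg_mono: "mono C m \<Longrightarrow> d (Dom C m) \<le> d (Cod C m)"
  using EZ unfolding EZ_category_def by (cases "iso C m") auto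

lemma deg_iso: "iso C f \<Longrightarrow> d (Dom C f) = d (Cod C f)"
  using deg_mono_iso iso_mono by blast

lemma deg_split_epi:
  assumes "split_epi C e"
  shows "d (Cod C e) \<le> d (Dom C e)" and "d (Cod C e) = d (Dom C e) \<longleftrightarrow> iso C e"
proof -
  obtain s where s: "s \<in> Ar C" "Dom C s = Cod C e" "Cod C s = Dom C e" "Cmp C e s = Idt C (Cod C e)" "mono C s"
    using split_epi_section assms by blast
  show "d (Cod C e) \<le> d (Dom C e)" using deg_mono[OF s(5)] s by simp
  show "d (Cod C e) = d (Dom C e) \<longleftrightarrow> iso C e"
  proof
    assume "d (Cod C e) = d (Dom C e)"
    then have "iso C s" using deg_mono_iso[OF s(5)] s by simp
    then obtain t where t: "t \<in> Ar C" "Dom C t = Cod C s" "Cod C t = Dom C s"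
     "Cmp C t s = Idt C (Dom C s)" "Cmp C s t = Idt C (Cod C s)" using iso_inv by blast
    have eA: "e \<in> Ar C" using assms split_epi_ar by blast
    have "e = Cmp C e (Cmp C s t)" using t s eA by simp
    also have "\<dots> = t" using cmp_retraction_cancel[of e s t] t s eA by simp
    finally show "iso C e" unfolding iso_def using t s by auto
  next
    assume "iso C e" then show "d (Cod C e) = d (Dom C e)" using deg_iso by simp
  qed
qed

lemma epi_mono_factorization:
  "f \<in> Ar C \<Longrightarrow> \<exists>e m. split_epi C e \<and> mono C m \<and> Cod C e = Dom C m \<and> f = Cmp C m e"
  using EZ unfolding EZ_category_def by blast

lemma absolute_pushout_exists:
  "split_epi C e1 \<Longrightarrow> split_epi C e2 \<Longrightarrow> Dom C e1 = Dom C e2 \<Longrightarrow> \<exists>f1 f2. absolute_pushout C e1 e2 f1 f2"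
  using EZ unfolding EZ_category_def by blast

lemma ndeg_deg_less: "ndeg C u \<Longrightarrow> d (Cod C u) < d (Dom C u)"
  unfolding ndeg_def using deg_split_epi by (meson le_neq_implies_less)

lemma eilenberg_zilber_exists:
  assumes Y: "presheaf C Y" and r: "r \<in> Ob C" and y: "y \<in> El Y r"
  shows "\<exists>e z. split_epi C e \<and> Dom C e = r \<and> z \<in> El Y (Cod C e) \<and> \<not> degenerate C Y (Cod C e) z
           \<and> y = Act Y e z"
  using r y
proof (induction "d r" arbitrary: r y rule: less_induct)
  case less
  show ?case
  proof (cases "degenerate C Y r y")
    case False
    then show ?thesis using less.prems Y
      by (intro exI[of _ "Idt C r"] exI[of _ y]) (auto intro: iso_split_epi idt_iso)
  next
    case True
    then obtain u y' where u: "ndeg C u" "Dom C u = r" "y' \<in> El Y (Cod C u)" "y = Act Y u y'"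
      unfolding degenerate_def by blast
    have uA: "u \<in> Ar C" using u(1) unfolding ndeg_def split_epi_def by blast
    have "d (Cod C u) < d r" using ndeg_deg_less[OF u(1)] u(2) by simp
    from less.hyps[OF this _ u(3)] uA obtain e z where
      ez: "split_epi C e" "Dom C e = Cod C u" "z \<in> El Y (Cod C e)" "\<not> degenerate C Y (Cod C e) z" "y' = Act Y e z"
      by blast
    have eA: "e \<in> Ar C" using ez(1) split_epi_ar by blast
    show ?thesis
    proof (intro exI conjI)
      show "split_epi C (Cmp C e u)" using split_epi_cmp u(1) ez(1,2) unfolding ndeg_def by simp
      show "Dom C (Cmp C e u) = r" using uA eA ez u by simp
      show "z \<in> El Y (Cod C (Cmp C e u))" using uA eA ez by simp
      show "\<not> degenerate C Y (Cod C (Cmp C e u)) z" using uA eA ez by simp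
      show "y = Act Y (Cmp C e u) z" using uA eA ez u act_cmp[OF Y] by simp
    qed
  qed
qed

lemma absolute_pushout_values_agree:
  assumes Y: "presheaf C Y" and ap: "absolute_pushout C e1 e2 f1 f2"
    and z1: "z1 \<in> El Y (Cod C e1)" and z2: "z2 \<in> El Y (Cod C e2)"
    and eq: "Act Y e1 z1 = Act Y e2 z2"
    and a: "a \<in> Ob C" and u: "u \<in> hom C a (Cod C e1) <+> hom C a (Cod C e2)"
    and v: "v \<in> hom C a (Cod C e1) <+> hom C a (Cod C e2)"
    and uv: "case_sum (Cmp C f1) (Cmp C f2) u = case_sum (Cmp C f1) (Cmp C f2) v"
  shows "case_sum (\<lambda>b. Act Y b z1) (\<lambda>c. Act Y c z2) u = case_sum (\<lambda>b. Act Y b z1) (\<lambda>c. Act Y c z2) v"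
proof -
  have sp: "set_pushout (hom C a (Dom C e1)) (hom C a (Cod C e1)) (hom C a (Cod C e2))
                 (hom C a (Cod C f1)) (Cmp C e1) (Cmp C e2) (Cmp C f1) (Cmp C f2)"
    and e: "e1 \<in> Ar C" "e2 \<in> Ar C" "Dom C e1 = Dom C e2"
    using ap a unfolding absolute_pushout_def by blast+
  have all: "\<forall>u\<in>hom C a (Cod C e1) <+> hom C a (Cod C e2). \<forall>v\<in>hom C a (Cod C e1) <+> hom C a (Cod C e2).
      case_sum (Cmp C f1) (Cmp C f2) u = case_sum (Cmp C f1) (Cmp C f2) v \<longrightarrow>
      (u, v) \<in> eqcl (hom C a (Cod C e1) <+> hom C a (Cod C e2))
           {(Inl (Cmp C e1 h), Inr (Cmp C e2 h)) | h. h \<in> hom C a (Dom C e1)}"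
    using sp unfolding set_pushout_def by blast
  have rel: "(u, v) \<in> eqcl (hom C a (Cod C e1) <+> hom C a (Cod C e2))
           {(Inl (Cmp C e1 h), Inr (Cmp C e2 h)) | h. h \<in> hom C a (Dom C e1)}"
    using all u v uv by blast
  show ?thesis
  proof (rule eqcl_invariant[OF _ rel])
    fix p q :: "'m + 'm" assume "(p, q) \<in> {(Inl (Cmp C e1 h), Inr (Cmp C e2 h)) | h. h \<in> hom C a (Dom C e1)}"
    then obtain h where h: "h \<in> hom C a (Dom C e1)" "p = Inl (Cmp C e1 h)" "q = Inr (Cmp C e2 h)" by blast
    have hA: "h \<in> Ar C" "Cod C h = Dom C e1" using h(1) unfolding hom_def by auto
    have "Act Y (Cmp C e1 h) z1 = Act Y h (Act Y e1 z1)" using act_cmp[OF Y] hA e z1 by simp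
    also have "\<dots> = Act Y h (Act Y e2 z2)" using eq by simp
    also have "\<dots> = Act Y (Cmp C e2 h) z2" using act_cmp[OF Y] hA e z2 by simp
    finally show "case_sum (\<lambda>b. Act Y b z1) (\<lambda>c. Act Y c z2) p = case_sum (\<lambda>b. Act Y b z1) (\<lambda>c. Act Y c z2) q"
      using h by simp
  qed
qed

text \<open>A splitting \<open>b\<close> of \<open>f\<^sub>1\<close> exhibits both \<open>z\<^sub>1\<close> and \<open>z\<^sub>2\<close> as restrictions of \<open>w = b\<^sup>* z\<^sub>1\<close>;
  nondegeneracy then forces \<open>f\<^sub>1\<close> and \<open>f\<^sub>2\<close> to be isomorphisms.\<close>
lemma absolute_pushout_nondegenerate_isos:
  assumes Y: "presheaf C Y" and e: "split_epi C e1" "split_epi C e2" "Dom C e1 = Dom C e2"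
    and z1: "z1 \<in> El Y (Cod C e1)" "\<not> degenerate C Y (Cod C e1) z1"
    and z2: "z2 \<in> El Y (Cod C e2)" "\<not> degenerate C Y (Cod C e2) z2"
    and f: "f1 \<in> Ar C" "f2 \<in> Ar C" "Dom C f1 = Cod C e1" "Dom C f2 = Cod C e2" "Cod C f1 = Cod C f2"
      "Cmp C f1 e1 = Cmp C f2 e2"
    and b: "b \<in> hom C (Cod C f1) (Cod C e1)" "Cmp C f1 b = Idt C (Cod C f1)"
    and agree_left: "\<And>a b b'. a \<in> Ob C \<Longrightarrow> b \<in> hom C a (Cod C e1) \<Longrightarrow> b' \<in> hom C a (Cod C e1) \<Longrightarrow>
               Cmp C f1 b = Cmp C f1 b' \<Longrightarrow> Act Y b z1 = Act Y b' z1"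
    and agree_cross: "\<And>a b c. a \<in> Ob C \<Longrightarrow> b \<in> hom C a (Cod C e1) \<Longrightarrow> c \<in> hom C a (Cod C e2) \<Longrightarrow>
               Cmp C f1 b = Cmp C f2 c \<Longrightarrow> Act Y b z1 = Act Y c z2"
  shows "iso C f1 \<and> iso C f2 \<and> (\<exists>w\<in>El Y (Cod C f1). z1 = Act Y f1 w \<and> z2 = Act Y f2 w)"
proof -
  have eA: "e1 \<in> Ar C" "e2 \<in> Ar C" using e split_epi_ar by auto
  have bA: "b \<in> Ar C" "Dom C b = Cod C f1" "Cod C b = Cod C e1" using b(1) unfolding hom_def by auto
  define w where "w = Act Y b z1"
  have w: "w \<in> El Y (Cod C f1)" unfolding w_def using bA z1 Y by (metis act_el)
  have s1: "Cod C e1 \<in> Ob C" and s2: "Cod C e2 \<in> Ob C" using eA by auto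
  have bf1: "Cmp C f1 (Cmp C b f1) = f1" and bf2: "Cmp C f1 (Cmp C b f2) = f2"
    using cmp_retraction_cancel[of f1 b] bA b(2) f by auto
  have w1: "z1 = Act Y f1 w"
  proof -
    have "Act Y f1 w = Act Y (Cmp C b f1) z1" unfolding w_def using act_cmp[OF Y] f bA z1 by simp
    also have "\<dots> = Act Y (Idt C (Cod C e1)) z1"
      by (rule agree_left[OF s1]) (use bA f bf1 s1 in \<open>auto simp: hom_def\<close>)
    also have "\<dots> = z1" using Y s1 z1 by simp
    finally show ?thesis by simp
  qed
  have w2: "z2 = Act Y f2 w"
  proof -
    have "Act Y f2 w = Act Y (Cmp C b f2) z1" unfolding w_def using act_cmp[OF Y] f bA z1 by simp
    also have "\<dots> = Act Y (Idt C (Cod C e2)) z2"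
      by (rule agree_cross[OF s2]) (use bA f bf2 s2 in \<open>auto simp: hom_def\<close>)
    also have "\<dots> = z2" using Y s2 z2 by simp
    finally show ?thesis by simp
  qed
  have se1: "split_epi C f1" unfolding split_epi_def using f bA b by auto
  have iso1: "iso C f1" using split_epi_iso_of_nondegenerate[OF se1 w] z1(2) w1 f(3) by simp
  have "split_epi C (Cmp C f1 e1)" by (rule split_epi_cmp[OF e(1) iso_split_epi[OF iso1]]) (use f in simp)
  then have se2: "split_epi C f2" using split_epi_right_factor[of f2 e2] f eA by simp
  have iso2: "iso C f2" using split_epi_iso_of_nondegenerate[OF se2, of w Y] w z2(2) w2 f(4,5) by simp
  show ?thesis using iso1 iso2 w w1 w2 by blast
qed

lemma absolute_pushout_of_nondegenerate:
  assumes Y: "presheaf C Y" and e: "split_epi C e1" "split_epi C e2" "Dom C e1 = Dom C e2"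
    and z1: "z1 \<in> El Y (Cod C e1)" "\<not> degenerate C Y (Cod C e1) z1"
    and z2: "z2 \<in> El Y (Cod C e2)" "\<not> degenerate C Y (Cod C e2) z2"
    and eq: "Act Y e1 z1 = Act Y e2 z2" and ap: "absolute_pushout C e1 e2 f1 f2"
  shows "iso C f1 \<and> iso C f2 \<and> (\<exists>w\<in>El Y (Cod C f1). z1 = Act Y f1 w \<and> z2 = Act Y f2 w)"
proof -
  have f: "f1 \<in> Ar C" "f2 \<in> Ar C" "Dom C f1 = Cod C e1" "Dom C f2 = Cod C e2" "Cod C f1 = Cod C f2"
      "Cmp C f1 e1 = Cmp C f2 e2"
    using ap unfolding absolute_pushout_def by blast+
  have t: "Cod C f1 \<in> Ob C" using f by auto
  note val = absolute_pushout_values_agree[OF Y ap z1(1) z2(1) eq]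
  have agree_left: "Act Y b z1 = Act Y b' z1" if "a \<in> Ob C" "b \<in> hom C a (Cod C e1)" "b' \<in> hom C a (Cod C e1)"
               "Cmp C f1 b = Cmp C f1 b'" for a b b'
    using val[of a "Inl b" "Inl b'"] that by auto
  have agree_right: "Act Y b z2 = Act Y b' z2" if "a \<in> Ob C" "b \<in> hom C a (Cod C e2)" "b' \<in> hom C a (Cod C e2)"
               "Cmp C f2 b = Cmp C f2 b'" for a b b'
    using val[of a "Inr b" "Inr b'"] that by auto
  have agree_cross: "Act Y b z1 = Act Y c z2" if "a \<in> Ob C" "b \<in> hom C a (Cod C e1)" "c \<in> hom C a (Cod C e2)"
               "Cmp C f1 b = Cmp C f2 c" for a b c
    using val[of a "Inl b" "Inr c"] that by auto
  have agree_cross_sym: "Act Y c z2 = Act Y b z1" if "a \<in> Ob C" "c \<in> hom C a (Cod C e2)" "b \<in> hom C a (Cod C e1)"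
               "Cmp C f2 c = Cmp C f1 b" for a b c
    using agree_cross[OF that(1,3,2) that(4)[symmetric]] by simp
  have sp: "set_pushout (hom C (Cod C f1) (Dom C e1)) (hom C (Cod C f1) (Cod C e1)) (hom C (Cod C f1) (Cod C e2))
                 (hom C (Cod C f1) (Cod C f1)) (Cmp C e1) (Cmp C e2) (Cmp C f1) (Cmp C f2)"
    using ap t unfolding absolute_pushout_def by blast
  have "Idt C (Cod C f1) \<in> hom C (Cod C f1) (Cod C f1)" using t unfolding hom_def by auto
  then have "Idt C (Cod C f1) \<in> Cmp C f1 ` hom C (Cod C f1) (Cod C e1) \<union> Cmp C f2 ` hom C (Cod C f1) (Cod C e2)"
    using sp unfolding set_pushout_def by blast
  then show ?thesis
  proof
    assume "Idt C (Cod C f1) \<in> Cmp C f1 ` hom C (Cod C f1) (Cod C e1)"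
    then obtain b where b: "b \<in> hom C (Cod C f1) (Cod C e1)" "Cmp C f1 b = Idt C (Cod C f1)" by auto
    show ?thesis by (rule absolute_pushout_nondegenerate_isos[OF Y e z1 z2 f b agree_left agree_cross])
  next
    assume "Idt C (Cod C f1) \<in> Cmp C f2 ` hom C (Cod C f1) (Cod C e2)"
    then obtain c where c: "c \<in> hom C (Cod C f2) (Cod C e2)" "Cmp C f2 c = Idt C (Cod C f2)" using f by auto
    have "iso C f2 \<and> iso C f1 \<and> (\<exists>w\<in>El Y (Cod C f2). z2 = Act Y f2 w \<and> z1 = Act Y f1 w)"
      by (rule absolute_pushout_nondegenerate_isos[OF Y e(2,1) e(3)[symmetric] z2 z1 f(2,1,4,3)
            f(5)[symmetric] f(6)[symmetric] c agree_right agree_cross_sym])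
    then show ?thesis using f by auto
  qed
qed

lemma eilenberg_zilber_unique:
  assumes Y: "presheaf C Y" and e: "split_epi C e1" "split_epi C e2" "Dom C e1 = Dom C e2"
    and z1: "z1 \<in> El Y (Cod C e1)" "\<not> degenerate C Y (Cod C e1) z1"
    and z2: "z2 \<in> El Y (Cod C e2)" "\<not> degenerate C Y (Cod C e2) z2"
    and eq: "Act Y e1 z1 = Act Y e2 z2"
  shows "\<exists>g. iso C g \<and> Dom C g = Cod C e1 \<and> Cod C g = Cod C e2 \<and> Cmp C g e1 = e2 \<and> z1 = Act Y g z2"
proof -
  obtain f1 f2 where ap: "absolute_pushout C e1 e2 f1 f2" using absolute_pushout_exists e by blast
  have f: "f1 \<in> Ar C" "f2 \<in> Ar C" "Dom C f1 = Cod C e1" "Dom C f2 = Cod C e2" "Cod C f1 = Cod C f2"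
      "Cmp C f1 e1 = Cmp C f2 e2"
    using ap unfolding absolute_pushout_def by blast+
  have eA: "e1 \<in> Ar C" "e2 \<in> Ar C" using e split_epi_ar by auto
  obtain w where iso: "iso C f1" "iso C f2" and w: "w \<in> El Y (Cod C f1)" "z1 = Act Y f1 w" "z2 = Act Y f2 w"
    using absolute_pushout_of_nondegenerate[OF Y e z1 z2 eq ap] by blast
  obtain f2' where f2': "f2' \<in> Ar C" "Dom C f2' = Cod C f2" "Cod C f2' = Dom C f2"
     "Cmp C f2' f2 = Idt C (Dom C f2)" "Cmp C f2 f2' = Idt C (Cod C f2)" "iso C f2'"
    using iso_inv iso(2) by blast
  define g where "g = Cmp C f2' f1"
  have giso: "iso C g" unfolding g_def using iso_cmp iso f2' f by simp
  have gA: "g \<in> Ar C" "Dom C g = Cod C e1" "Cod C g = Cod C e2" unfolding g_def using f f2' by auto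
  have "Cmp C g e1 = Cmp C f2' (Cmp C f1 e1)"
    unfolding g_def using f f2' eA by (intro cmp_assoc[symmetric]) auto
  also have "\<dots> = Cmp C f2' (Cmp C f2 e2)" using f by simp
  also have "\<dots> = e2" by (rule cmp_retraction_cancel) (use f2' f eA in simp_all)
  finally have ge: "Cmp C g e1 = e2" .
  have "Act Y g z2 = Act Y f1 (Act Y f2' z2)" unfolding g_def
    by (rule act_cmp[OF Y]) (use f f2' w z2 in auto)
  also have "\<dots> = Act Y f1 (Act Y (Cmp C f2 f2') w)" using act_cmp[OF Y, of f2' f2 w] f f2' w by simp
  also have "\<dots> = z1" using f2' f w Y by simp
  finally have gz: "z1 = Act Y g z2" ..
  show ?thesis using giso gA ge gz by blast
qed

section \<open>Normal forms in colimits over arrows out of an object\<close>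

text \<open>The hypothesis under which every class of a colimit over arrows out of \<open>r\<close> has a
  representative \<open>(e, z)\<close> with \<open>e\<close> a degeneracy operator and \<open>z\<close> nondegenerate.\<close>
definition factor_closed :: "('m \<Rightarrow> bool) \<Rightarrow> 'o \<Rightarrow> bool" where
  "factor_closed P r \<longleftrightarrow> (\<forall>f e m. P f \<longrightarrow> f \<in> Ar C \<longrightarrow> Dom C f = r \<longrightarrow> split_epi C e \<longrightarrow> mono C m \<longrightarrow> Cod C e = Dom C m \<longrightarrow>
        f = Cmp C m e \<longrightarrow> P e) \<and>
     (\<forall>e e'. P e \<longrightarrow> split_epi C e \<longrightarrow> Dom C e = r \<longrightarrow> split_epi C e' \<longrightarrow> Dom C e' = Cod C e \<longrightarrow> P (Cmp C e' e))"

lemma ccolim_nondegenerate_rep: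
  assumes Y: "presheaf C Y" and G: "factor_closed P r" and p: "(f, y) \<in> cgens C P Y r"
  shows "\<exists>e z. split_epi C e \<and> Dom C e = r \<and> P e \<and> z \<in> El Y (Cod C e) \<and> \<not> degenerate C Y (Cod C e) z
            \<and> ((f, y), (e, z)) \<in> crelq C P Y r"
proof -
  have f: "f \<in> Ar C" "Dom C f = r" "P f" "y \<in> El Y (Cod C f)" using p unfolding cgens_def by auto
  obtain e m where em: "split_epi C e" "mono C m" "Cod C e = Dom C m" "f = Cmp C m e" using epi_mono_factorization f(1) by blast
  have eA: "e \<in> Ar C" and mA: "m \<in> Ar C" using em split_epi_ar mono_ar by auto
  have Pe: "P e" using G f em unfolding factor_closed_def by blast
  have de: "Dom C e = r" and cm: "Cod C m = Cod C f" using f em eA mA by auto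
  have "((e, Act Y m y), (Cmp C m e, y)) \<in> crelq C P Y r"
    by (rule crel_in_crelq[where P=P, OF Y eA de Pe mA em(3)[symmetric]]) (use f em cm in auto)
  then have r1: "((e, Act Y m y), (f, y)) \<in> crelq C P Y r" using em(4) by simp
  have my: "Act Y m y \<in> El Y (Cod C e)" using act_el[OF Y mA] f cm em by simp
  obtain e' z where ez: "split_epi C e'" "Dom C e' = Cod C e" "z \<in> El Y (Cod C e')"
    "\<not> degenerate C Y (Cod C e') z" "Act Y m y = Act Y e' z"
    using eilenberg_zilber_exists[OF Y _ my] eA by blast
  have e'A: "e' \<in> Ar C" using ez split_epi_ar by auto
  have Pe': "P (Cmp C e' e)" using G Pe em(1) de ez(1,2) unfolding factor_closed_def by blast
  have r2: "((e, Act Y e' z), (Cmp C e' e, z)) \<in> crelq C P Y r"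
    by (rule crel_in_crelq[where P=P, OF Y eA de Pe e'A ez(2) Pe' ez(3)])
  have "((f, y), (Cmp C e' e, z)) \<in> crelq C P Y r"
    using crelq_trans[OF Y crelq_sym[OF Y r1]] r2 ez(5) by simp
  moreover have "split_epi C (Cmp C e' e)" using split_epi_cmp em(1) ez(1,2) by simp
  ultimately show ?thesis using Pe' ez e'A eA de by (intro exI[of _ "Cmp C e' e"] exI[of _ z]) auto
qed

lemma ccolim_nondegenerate_repE:
  assumes Y: "presheaf C Y" and G: "factor_closed P r" and K: "K \<in> ccolim C P Y r"
  obtains e z where "split_epi C e" "Dom C e = r" "P e" "z \<in> El Y (Cod C e)" "\<not> degenerate C Y (Cod C e) z"
     "K = crelq C P Y r `` {(e, z)}" "(e, z) \<in> cgens C P Y r"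
proof -
  obtain f y where p: "(f, y) \<in> cgens C P Y r" "K = crelq C P Y r `` {(f, y)}" using ccolimE K by blast
  obtain e z where ez: "split_epi C e" "Dom C e = r" "P e" "z \<in> El Y (Cod C e)" "\<not> degenerate C Y (Cod C e) z"
            "((f, y), (e, z)) \<in> crelq C P Y r" using ccolim_nondegenerate_rep[OF Y G p(1)] by blast
  have "K = crelq C P Y r `` {(e, z)}" using p ez(6) equiv_class_eq[OF crelq_equiv[OF Y]] by metis
  moreover have "(e, z) \<in> cgens C P Y r" using crelq_in[OF Y ez(6)] by blast
  ultimately show ?thesis using that ez by blast
qed

lemma ceval_inj_on:
  assumes Y: "presheaf C Y" and G: "factor_closed P r" and K: "K \<in> ccolim C P Y r" and K': "K' \<in> ccolim C P Y r"
    and eq: "ceval Y K = ceval Y K'"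
  shows "K = K'"
proof -
  obtain e z where ez: "split_epi C e" "Dom C e = r" "P e" "z \<in> El Y (Cod C e)" "\<not> degenerate C Y (Cod C e) z"
     "K = crelq C P Y r `` {(e, z)}" "(e, z) \<in> cgens C P Y r" using ccolim_nondegenerate_repE[OF Y G K] by blast
  obtain e' z' where ez': "split_epi C e'" "Dom C e' = r" "P e'" "z' \<in> El Y (Cod C e')" "\<not> degenerate C Y (Cod C e') z'"
     "K' = crelq C P Y r `` {(e', z')}" "(e', z') \<in> cgens C P Y r" using ccolim_nondegenerate_repE[OF Y G K'] by blast
  have "Act Y e z = Act Y e' z'" using eq ez(6,7) ez'(6,7) ceval_class[OF Y] by simp
  then obtain g where g: "iso C g" "Dom C g = Cod C e" "Cod C g = Cod C e'" "Cmp C g e = e'" "z = Act Y g z'"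
    using eilenberg_zilber_unique[OF Y ez(1) ez'(1) _ ez(4,5) ez'(4,5)] ez(2) ez'(2) by metis
  have gA: "g \<in> Ar C" using g iso_ar by blast
  have eA: "e \<in> Ar C" using ez split_epi_ar by blast
  have "((e, Act Y g z'), (Cmp C g e, z')) \<in> crelq C P Y r"
    by (rule crel_in_crelq[where P=P, OF Y eA ez(2,3) gA g(2)]) (use g ez' in auto)
  then have "((e, z), (e', z')) \<in> crelq C P Y r" using g by simp
  then show ?thesis using ez(6) ez'(6) equiv_class_eq[OF crelq_equiv[OF Y]] by metis
qed

lemma factor_closed_ndeg: "factor_closed (ndeg C) r"
  unfolding factor_closed_def
proof (intro conjI allI impI)
  fix f e m assume a: "ndeg C f" "f \<in> Ar C" "Dom C f = r" "split_epi C e" "mono C m" "Cod C e = Dom C m" "f = Cmp C m e"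
  show "ndeg C e" unfolding ndeg_def
  proof (intro conjI notI)
    show "split_epi C e" by fact
    assume ie: "iso C e"
    obtain s where s: "s \<in> Ar C" "Dom C s = Cod C f" "Cod C s = Dom C f" "Cmp C f s = Idt C (Cod C f)"
      using a(1) unfolding ndeg_def split_epi_def by blast
    have eA: "e \<in> Ar C" and mA: "m \<in> Ar C" using a split_epi_ar mono_ar by auto
    have cf: "Cod C f = Cod C m" "Dom C f = Dom C e" using a eA mA by auto
    have "Cmp C m (Cmp C e s) = Cmp C (Cmp C m e) s" using s eA mA a cf by (intro cmp_assoc) auto
    also have "\<dots> = Idt C (Cod C m)" using s a(7) cf by simp
    finally have "iso C m" using mono_split_epi_iso[OF a(5), of "Cmp C e s"] s eA mA a cf by auto
    then have "iso C f" using iso_cmp[OF ie] a by simp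
    then show False using a(1) unfolding ndeg_def by blast
  qed
next
  fix e e' assume a: "ndeg C e" "split_epi C e" "Dom C e = r" "split_epi C e'" "Dom C e' = Cod C e"
  have se: "split_epi C (Cmp C e' e)" using split_epi_cmp a by simp
  have eA: "e \<in> Ar C" "e' \<in> Ar C" using a split_epi_ar by auto
  have "d (Cod C (Cmp C e' e)) < d (Dom C (Cmp C e' e))"
    using deg_split_epi(1)[OF a(4)] ndeg_deg_less[OF a(1)] a eA by simp
  then have "\<not> iso C (Cmp C e' e)" using deg_iso by fastforce
  then show "ndeg C (Cmp C e' e)" using se unfolding ndeg_def by blast
qed

lemma factor_closed_skP: "factor_closed (skP C d n) r"
  unfolding factor_closed_def skP_def
proof (intro conjI allI impI)
  fix f e m assume a: "int (d (Cod C f)) \<le> n" "f \<in> Ar C" "Dom C f = r" "split_epi C e" "mono C m" "Cod C e = Dom C m" "f = Cmp C m e"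
  have eA: "e \<in> Ar C" and mA: "m \<in> Ar C" using a split_epi_ar mono_ar by auto
  have "d (Cod C e) \<le> d (Cod C f)" using deg_mono[OF a(5)] a eA mA by simp
  then show "int (d (Cod C e)) \<le> n" using a(1) by linarith
next
  fix e e' assume a: "int (d (Cod C e)) \<le> n" "split_epi C e" "Dom C e = r" "split_epi C e'" "Dom C e' = Cod C e"
  have eA: "e \<in> Ar C" "e' \<in> Ar C" using a split_epi_ar by auto
  have "d (Cod C e') \<le> d (Cod C e)" using deg_split_epi(1)[OF a(4)] a by simp
  then show "int (d (Cod C (Cmp C e' e))) \<le> n" using a eA by simp
qed
text \<open>Factor a representative \<open>f = m \<circ> e\<close>; pulling \<open>x\<close> back along a section of \<open>e\<close> gives the
  representative \<open>(e, s\<^sup>* x)\<close> over \<open>X\<close>.\<close>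
lemma ccolim_lift:
  assumes X: "presheaf C X" and Y: "presheaf C Y" and phi: "psh_map C X Y \<phi>" and mono: "psh_mono C X \<phi>"
    and G: "factor_closed P r" and r: "r \<in> Ob C" and x: "x \<in> El X r" and L: "L \<in> ccolim C P Y r"
    and eq: "\<phi> r x = ceval Y L"
  shows "\<exists>K\<in>ccolim C P X r. x = ceval X K \<and> L = cmap C P Y \<phi> r K"
proof -
  obtain f y where p: "(f, y) \<in> cgens C P Y r" "L = crelq C P Y r `` {(f, y)}" using ccolimE L by blast
  have f: "f \<in> Ar C" "Dom C f = r" "P f" "y \<in> El Y (Cod C f)" using p unfolding cgens_def by auto
  obtain e m where em: "split_epi C e" "mono C m" "Cod C e = Dom C m" "f = Cmp C m e" using epi_mono_factorization f(1) by blast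
  have eA: "e \<in> Ar C" and mA: "m \<in> Ar C" using em split_epi_ar mono_ar by auto
  have Pe: "P e" using G f em unfolding factor_closed_def by blast
  have de: "Dom C e = r" and cm: "Cod C m = Cod C f" using f em eA mA by auto
  obtain s where s: "s \<in> Ar C" "Dom C s = Cod C e" "Cod C s = Dom C e" "Cmp C e s = Idt C (Cod C e)"
    using split_epi_section[OF em(1)] by blast
  define x' where "x' = Act X s x"
  have x': "x' \<in> El X (Cod C e)" unfolding x'_def using act_el[OF X s(1)] s x de by simp
  have gen: "(e, x') \<in> cgens C P X r" using eA de Pe x' unfolding cgens_def by auto
  define K where "K = crelq C P X r `` {(e, x')}"
  have K: "K \<in> ccolim C P X r" unfolding K_def by (rule class_in_ccolim[OF gen])
  have fs: "Cmp C f s = m"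
  proof -
    have "Cmp C f s = Cmp C m (Cmp C e s)" unfolding em(4) using eA mA s em by (intro cmp_assoc[symmetric]) auto
    also have "\<dots> = m" using s mA em by simp
    finally show ?thesis .
  qed
  have phx': "\<phi> (Cod C e) x' = Act Y m y"
  proof -
    have "\<phi> (Cod C e) x' = Act Y s (\<phi> r x)" unfolding x'_def using phi s x de unfolding psh_map_def by metis
    also have "\<phi> r x = Act Y f y" using eq ceval_class[OF Y p(1)] p(2) by simp
    finally have "\<phi> (Cod C e) x' = Act Y s (Act Y f y)" .
    also have "\<dots> = Act Y (Cmp C f s) y" using act_cmp[OF Y, of s f y] s f de by simp
    finally show ?thesis using fs by simp
  qed
  have "((e, Act Y m y), (Cmp C m e, y)) \<in> crelq C P Y r"
    by (rule crel_in_crelq[where P=P, OF Y eA de Pe mA em(3)[symmetric]]) (use f em cm in auto)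
  then have "cmap C P Y \<phi> r K = L"
    using cmap_class[OF X Y phi gen] phx' p(2) em(4) equiv_class_eq[OF crelq_equiv[OF Y]] unfolding K_def
    by simp
  moreover have "ceval X K = x"
  proof -
    have cK: "ceval X K = Act X e x'" unfolding K_def using ceval_class[OF X gen] .
    have "\<phi> r (Act X e x') = Act Y e (\<phi> (Cod C e) x')" using phi eA x' de unfolding psh_map_def by metis
    also have "\<dots> = Act Y f y" using phx' act_cmp[OF Y eA mA em(3)] f cm em(4) by simp
    also have "\<dots> = \<phi> r x" using eq ceval_class[OF Y p(1)] p(2) by simp
    finally have "\<phi> r (Act X e x') = \<phi> r x" .
    moreover have "Act X e x' \<in> El X r" using act_el[OF X eA] x' de by simp
    moreover have "inj_on (\<phi> r) (El X r)" using mono r unfolding psh_mono_def by blast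
    ultimately show ?thesis using inj_onD x cK by metis
  qed
  ultimately show ?thesis using K by blast
qed

section \<open>The relative latching map\<close>

lemma psh_map_nondegenerate:
  assumes X: "presheaf C X" and Y: "presheaf C Y" and phi: "psh_map C X Y \<phi>"
    and s: "s \<in> Ob C" and inj: "inj_on (\<phi> s) (El X s)" and z: "z \<in> El X s" and nd: "\<not> degenerate C X s z"
  shows "\<not> degenerate C Y s (\<phi> s z)"
proof
  assume "degenerate C Y s (\<phi> s z)"
  then obtain v y where v: "ndeg C v" "Dom C v = s" "y \<in> El Y (Cod C v)" "\<phi> s z = Act Y v y"
    unfolding degenerate_def by blast
  have vA: "v \<in> Ar C" using v(1) unfolding ndeg_def split_epi_def by blast
  obtain \<sigma> where sg: "\<sigma> \<in> Ar C" "Dom C \<sigma> = Cod C v" "Cod C \<sigma> = Dom C v" "Cmp C v \<sigma> = Idt C (Cod C v)"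
    using split_epi_section v(1) unfolding ndeg_def by blast
  define z' where "z' = Act X \<sigma> z"
  have z': "z' \<in> El X (Cod C v)" unfolding z'_def using act_el[OF X sg(1)] sg z v by simp
  have zz: "Act X v z' \<in> El X s" using act_el[OF X vA z'] v by simp
  have "\<phi> s (Act X v z') = Act Y v (\<phi> (Cod C v) z')" using phi vA z' v unfolding psh_map_def by metis
  also have "\<phi> (Cod C v) z' = Act Y \<sigma> (\<phi> s z)" unfolding z'_def using phi sg z v unfolding psh_map_def by metis
  also have "Act Y \<sigma> (\<phi> s z) = Act Y (Cmp C v \<sigma>) y" using act_cmp[OF Y sg(1) vA] sg v by simp
  also have "\<dots> = y" using sg v vA Y by simp
  finally have "\<phi> s (Act X v z') = \<phi> s z" using v by simp
  then have "Act X v z' = z" using inj zz z by (metis inj_onD)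
  then have "degenerate C X s z" unfolding degenerate_def using v z' by blast
  then show False using nd by blast
qed

lemma latching_ceval_inj:
  assumes X: "presheaf C X" and Y: "presheaf C Y" and phi: "psh_map C X Y \<phi>"
    and r: "r \<in> Ob C" and IH: "\<And>s. s \<in> Ob C \<Longrightarrow> d s < d r \<Longrightarrow> inj_on (\<phi> s) (El X s)"
    and K: "K \<in> Lr C X r" and K': "K' \<in> Lr C X r"
    and eq: "\<phi> r (ceval X K) = \<phi> r (ceval X K')"
  shows "ceval X K = ceval X K'"
proof -
  obtain e z where ez: "split_epi C e" "Dom C e = r" "ndeg C e" "z \<in> El X (Cod C e)" "\<not> degenerate C X (Cod C e) z"
     "K = crelq C (ndeg C) X r `` {(e, z)}" "(e, z) \<in> cgens C (ndeg C) X r"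
    using ccolim_nondegenerate_repE[OF X factor_closed_ndeg K[unfolded Lr_def]] by blast
  obtain e' z' where ez': "split_epi C e'" "Dom C e' = r" "ndeg C e'" "z' \<in> El X (Cod C e')" "\<not> degenerate C X (Cod C e') z'"
     "K' = crelq C (ndeg C) X r `` {(e', z')}" "(e', z') \<in> cgens C (ndeg C) X r"
    using ccolim_nondegenerate_repE[OF X factor_closed_ndeg K'[unfolded Lr_def]] by blast
  have eA: "e \<in> Ar C" "e' \<in> Ar C" using ez ez' split_epi_ar by auto
  have ob: "Cod C e \<in> Ob C" "Cod C e' \<in> Ob C" using eA by auto
  have dl: "d (Cod C e) < d r" "d (Cod C e') < d r" using ndeg_deg_less[OF ez(3)] ndeg_deg_less[OF ez'(3)] ez(2) ez'(2) by auto
  have inj1: "inj_on (\<phi> (Cod C e)) (El X (Cod C e))" using IH ob dl by auto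
  have inj2: "inj_on (\<phi> (Cod C e')) (El X (Cod C e'))" using IH ob dl by auto
  have c1: "ceval X K = Act X e z" using ceval_class[OF X ez(7)] ez(6) by simp
  have c2: "ceval X K' = Act X e' z'" using ceval_class[OF X ez'(7)] ez'(6) by simp
  have n1: "\<not> degenerate C Y (Cod C e) (\<phi> (Cod C e) z)" by (rule psh_map_nondegenerate[OF X Y phi ob(1) inj1 ez(4,5)])
  have n2: "\<not> degenerate C Y (Cod C e') (\<phi> (Cod C e') z')" by (rule psh_map_nondegenerate[OF X Y phi ob(2) inj2 ez'(4,5)])
  have p1: "\<phi> (Cod C e) z \<in> El Y (Cod C e)" "\<phi> (Cod C e') z' \<in> El Y (Cod C e')"
    using phi ob ez ez' unfolding psh_map_def by auto
  have "Act Y e (\<phi> (Cod C e) z) = \<phi> r (Act X e z)" using phi eA ez unfolding psh_map_def by metis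
  also have "\<dots> = Act Y e' (\<phi> (Cod C e') z')" using eq c1 c2 phi eA ez' unfolding psh_map_def by metis
  finally obtain g where g: "iso C g" "Dom C g = Cod C e" "Cod C g = Cod C e'" "Cmp C g e = e'"
     "\<phi> (Cod C e) z = Act Y g (\<phi> (Cod C e') z')"
    using eilenberg_zilber_unique[OF Y ez(1) ez'(1) _ p1(1) n1 p1(2) n2] ez(2) ez'(2) by metis
  have gA: "g \<in> Ar C" using g iso_ar by blast
  have "\<phi> (Cod C e) (Act X g z') = Act Y g (\<phi> (Cod C e') z')" using phi gA g ez' unfolding psh_map_def by metis
  then have "\<phi> (Cod C e) (Act X g z') = \<phi> (Cod C e) z" using g by simp
  moreover have "Act X g z' \<in> El X (Cod C e)" using act_el[OF X gA] g ez' by simp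
  ultimately have "Act X g z' = z" using inj1 ez(4) by (metis inj_onD)
  then have "Act X e z = Act X (Cmp C g e) z'" using act_cmp[OF X, of e g z'] eA gA g ez' by simp
  then show ?thesis using c1 c2 g by simp
qed

lemma latching_legs: "presheaf C X \<Longrightarrow> presheaf C Y \<Longrightarrow> psh_map C X Y \<phi> \<Longrightarrow>
  \<forall>K\<in>Lr C X r. ceval X K \<in> El X r \<and> cmap C (ndeg C) Y \<phi> r K \<in> Lr C Y r"
  unfolding Lr_def using ceval_mem cmap_mem by blast

lemma latching_square_commutes: "presheaf C X \<Longrightarrow> presheaf C Y \<Longrightarrow> psh_map C X Y \<phi> \<Longrightarrow> K \<in> Lr C X r \<Longrightarrow>
  \<phi> r (ceval X K) = ceval Y (cmap C (ndeg C) Y \<phi> r K)"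
  unfolding Lr_def using ceval_cmap by metis

lemma rel_latch_map_class:
  assumes X: "presheaf C X" and Y: "presheaf C Y" and phi: "psh_map C X Y \<phi>"
    and u: "u \<in> El X r <+> Lr C Y r"
  shows "rel_latch_map Y \<phi> r (spo_rel (El X r) (Lr C Y r) (Lr C X r) (ceval X) (cmap C (ndeg C) Y \<phi> r) `` {u})
     = case_sum (\<phi> r) (ceval Y) u"
  unfolding rel_latch_map_def
  by (rule spo_case_sum_class[where F="\<phi> r" and G="ceval Y", OF latching_legs[OF X Y phi, where r=r] latching_square_commutes[OF X Y phi, where r=r] u])

lemma degenerate_iff_latching_image:
  assumes Y: "presheaf C Y" and y: "y \<in> El Y r"
  shows "degenerate C Y r y \<longleftrightarrow> y \<in> ceval Y ` Lr C Y r"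
proof
  assume "degenerate C Y r y"
  then obtain u y' where u: "ndeg C u" "Dom C u = r" "y' \<in> El Y (Cod C u)" "y = Act Y u y'"
    unfolding degenerate_def by blast
  have uA: "u \<in> Ar C" using u(1) unfolding ndeg_def split_epi_def by blast
  have g: "(u, y') \<in> cgens C (ndeg C) Y r" using u uA unfolding cgens_def by auto
  show "y \<in> ceval Y ` Lr C Y r"
    using class_in_ccolim[OF g] ceval_class[OF Y g] u(4) unfolding Lr_def by force
next
  assume "y \<in> ceval Y ` Lr C Y r"
  then obtain K where K: "K \<in> Lr C Y r" "y = ceval Y K" by blast
  obtain f x where p: "(f, x) \<in> cgens C (ndeg C) Y r" "K = crelq C (ndeg C) Y r `` {(f, x)}"
    using ccolimE K(1) unfolding Lr_def by blast
  have "y = Act Y f x" using K p ceval_class[OF Y p(1)] by simp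
  then show "degenerate C Y r y" using p(1) unfolding cgens_def degenerate_def by blast
qed

lemma rel_latch_map_image:
  assumes X: "presheaf C X" and Y: "presheaf C Y" and phi: "psh_map C X Y \<phi>"
  shows "rel_latch_map Y \<phi> r ` rel_latch_obj C X Y \<phi> r = \<phi> r ` El X r \<union> ceval Y ` Lr C Y r"
proof
  show "rel_latch_map Y \<phi> r ` rel_latch_obj C X Y \<phi> r \<subseteq> \<phi> r ` El X r \<union> ceval Y ` Lr C Y r"
  proof
    fix y assume "y \<in> rel_latch_map Y \<phi> r ` rel_latch_obj C X Y \<phi> r"
    then obtain K where K: "K \<in> rel_latch_obj C X Y \<phi> r" "y = rel_latch_map Y \<phi> r K" by blast
    obtain u where u: "u \<in> El X r <+> Lr C Y r"
       "K = spo_rel (El X r) (Lr C Y r) (Lr C X r) (ceval X) (cmap C (ndeg C) Y \<phi> r) `` {u}"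
      using spoE K(1) unfolding rel_latch_obj_def by blast
    have "y = case_sum (\<phi> r) (ceval Y) u" using K u rel_latch_map_class[OF X Y phi u(1)] by simp
    then show "y \<in> \<phi> r ` El X r \<union> ceval Y ` Lr C Y r" using u(1) by auto
  qed
  show "\<phi> r ` El X r \<union> ceval Y ` Lr C Y r \<subseteq> rel_latch_map Y \<phi> r ` rel_latch_obj C X Y \<phi> r"
  proof
    fix y assume "y \<in> \<phi> r ` El X r \<union> ceval Y ` Lr C Y r"
    then obtain u where u: "u \<in> El X r <+> Lr C Y r" "y = case_sum (\<phi> r) (ceval Y) u"
    proof
      assume "y \<in> \<phi> r ` El X r"
      then obtain x where "x \<in> El X r" "y = \<phi> r x" by blast
      then show thesis using that[of "Inl x"] by auto
    next
      assume "y \<in> ceval Y ` Lr C Y r"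
      then obtain L where "L \<in> Lr C Y r" "y = ceval Y L" by blast
      then show thesis using that[of "Inr L"] by auto
    qed
    show "y \<in> rel_latch_map Y \<phi> r ` rel_latch_obj C X Y \<phi> r"
      using rel_latch_map_class[OF X Y phi u(1)] spo_classI[OF u(1)] u(2) unfolding rel_latch_obj_def by force
  qed
qed

lemma inj_on_of_rel_latch_map_inj_on:
  assumes X: "presheaf C X" and Y: "presheaf C Y" and phi: "psh_map C X Y \<phi>" and r: "r \<in> Ob C"
    and below: "\<And>s. s \<in> Ob C \<Longrightarrow> d s < d r \<Longrightarrow> inj_on (\<phi> s) (El X s)"
    and inj: "inj_on (rel_latch_map Y \<phi> r) (rel_latch_obj C X Y \<phi> r)"
  shows "inj_on (\<phi> r) (El X r)"
proof (rule inj_onI)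
  fix x x' assume x: "x \<in> El X r" "x' \<in> El X r" "\<phi> r x = \<phi> r x'"
  let ?R = "spo_rel (El X r) (Lr C Y r) (Lr C X r) (ceval X) (cmap C (ndeg C) Y \<phi> r)"
  have u: "Inl x \<in> El X r <+> Lr C Y r" "Inl x' \<in> El X r <+> Lr C Y r" using x by auto
  have "?R `` {Inl x} = ?R `` {Inl x'}"
  proof (rule inj_onD[OF inj])
    show "rel_latch_map Y \<phi> r (?R `` {Inl x}) = rel_latch_map Y \<phi> r (?R `` {Inl x'})"
      using rel_latch_map_class[OF X Y phi u(1)] rel_latch_map_class[OF X Y phi u(2)] x(3) by simp
    show "?R `` {Inl x} \<in> rel_latch_obj C X Y \<phi> r" "?R `` {Inl x'} \<in> rel_latch_obj C X Y \<phi> r"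
      unfolding rel_latch_obj_def using spo_classI u by blast+
  qed
  then have "(Inl x, Inl x') \<in> ?R"
    using eq_equiv_class_iff[OF spo_equiv[OF latching_legs[OF X Y phi]] u] by blast
  then show "x = x'" unfolding spo_rel_def
  proof (rule spo_inl_inj[rotated])
    fix K K' assume K: "K \<in> Lr C X r" "K' \<in> Lr C X r"
      and eq: "cmap C (ndeg C) Y \<phi> r K = cmap C (ndeg C) Y \<phi> r K'"
    have "\<phi> r (ceval X K) = \<phi> r (ceval X K')" using latching_square_commutes[OF X Y phi] K eq by metis
    then show "ceval X K = ceval X K'" using latching_ceval_inj[OF X Y phi r below K] by blast
  qed
qed

lemma rel_latch_map_inj_on:
  assumes X: "presheaf C X" and Y: "presheaf C Y" and phi: "psh_map C X Y \<phi>"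
    and mono: "psh_mono C X \<phi>" and r: "r \<in> Ob C"
  shows "inj_on (rel_latch_map Y \<phi> r) (rel_latch_obj C X Y \<phi> r)"
  unfolding rel_latch_map_def rel_latch_obj_def
proof (rule spo_case_sum_inj[where F="\<phi> r" and G="ceval Y", OF latching_legs[OF X Y phi, where r=r] latching_square_commutes[OF X Y phi, where r=r]])
  show "inj_on (\<phi> r) (El X r)" using mono r unfolding psh_mono_def by blast
  show "inj_on (ceval Y) (Lr C Y r)" unfolding Lr_def
    by (rule inj_onI) (rule ceval_inj_on[OF Y factor_closed_ndeg])
  fix x L assume "x \<in> El X r" "L \<in> Lr C Y r" "\<phi> r x = ceval Y L"
  then show "\<exists>K\<in>Lr C X r. x = ceval X K \<and> L = cmap C (ndeg C) Y \<phi> r K"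
    using ccolim_lift[OF X Y phi mono factor_closed_ndeg r] unfolding Lr_def by blast
qed

end

locale ez_map = ez_cat +
  fixes X :: "('a,'b,'x) psh" and Y :: "('a,'b,'y) psh" and \<phi> :: "'a \<Rightarrow> 'x \<Rightarrow> 'y"
  assumes X: "presheaf C X" and Y: "presheaf C Y" and phi: "psh_map C X Y \<phi>"
begin

definition trivial_isotropy :: bool where
  "trivial_isotropy \<longleftrightarrow> (\<forall>r\<in>Ob C. \<forall>y\<in>El Y r - \<phi> r ` El X r. \<not> degenerate C Y r y \<longrightarrow>
              {g \<in> Aut C r. Act Y g y = y} = {Idt C r})"

definition free_latching :: bool where
  "free_latching \<longleftrightarrow> (\<forall>r\<in>Ob C.
     free_ext (Aut C r) (Idt C r) (Act Y) (rel_latch_obj C X Y \<phi> r) (El Y r) (rel_latch_map Y \<phi> r))"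

lemma free_latching_mono:
  assumes free_latching
  shows "psh_mono C X \<phi>"
proof -
  have "inj_on (\<phi> r) (El X r)" if "r \<in> Ob C" for r
    using that
  proof (induction "d r" arbitrary: r rule: less_induct)
    case less
    then show ?case
      using assms inj_on_of_rel_latch_map_inj_on[OF X Y phi]
      unfolding free_latching_def free_ext_def by blast
  qed
  then show ?thesis unfolding psh_mono_def by blast
qed

lemma free_latching_trivial_isotropy:
  assumes free_latching
  shows trivial_isotropy
  unfolding trivial_isotropy_def
proof (intro ballI impI)
  fix r y assume r: "r \<in> Ob C" and y: "y \<in> El Y r - \<phi> r ` El X r" and nd: "\<not> degenerate C Y r y"
  have "y \<notin> rel_latch_map Y \<phi> r ` rel_latch_obj C X Y \<phi> r"
    using rel_latch_map_image[OF X Y phi] y nd degenerate_iff_latching_image[OF Y] by blast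
  then have "\<forall>g\<in>Aut C r. Act Y g y = y \<longrightarrow> g = Idt C r"
    using assms r y unfolding free_latching_def free_ext_def by blast
  moreover have "Act Y (Idt C r) y = y" using Y r y by simp
  ultimately show "{g \<in> Aut C r. Act Y g y = y} = {Idt C r}" using Idt_in_Aut[OF r] by blast
qed

lemma free_latching_of_trivial_isotropy:
  assumes mono: "psh_mono C X \<phi>" and triv: trivial_isotropy
  shows free_latching
  unfolding free_latching_def free_ext_def
proof (intro ballI conjI impI)
  fix r assume r: "r \<in> Ob C"
  show "rel_latch_map Y \<phi> r ` rel_latch_obj C X Y \<phi> r \<subseteq> El Y r"
    unfolding rel_latch_map_image[OF X Y phi] using phi r ceval_mem[OF Y] unfolding psh_map_def Lr_def by blast
  show "inj_on (rel_latch_map Y \<phi> r) (rel_latch_obj C X Y \<phi> r)"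
    by (rule rel_latch_map_inj_on[OF X Y phi mono r])
  fix b g assume "b \<in> El Y r - rel_latch_map Y \<phi> r ` rel_latch_obj C X Y \<phi> r" and g: "g \<in> Aut C r" "Act Y g b = b"
  then have "b \<in> El Y r - \<phi> r ` El X r" "\<not> degenerate C Y r b"
    using rel_latch_map_image[OF X Y phi] degenerate_iff_latching_image[OF Y] by auto
  then show "g = Idt C r" using triv r g unfolding trivial_isotropy_def by blast
qed

lemma free_latching_iff_mono_trivial_isotropy:
  "free_latching \<longleftrightarrow> psh_mono C X \<phi> \<and> trivial_isotropy"
  using free_latching_mono free_latching_trivial_isotropy free_latching_of_trivial_isotropy by blast

end

section \<open>Relative skeleta\<close>

context ez_cat
begin

lemma skP_mono: "skP C d n f \<Longrightarrow> n \<le> m \<Longrightarrow> skP C d m f"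
  unfolding skP_def by simp

lemma cgens_skP_mono: "p \<in> cgens C (skP C d n) Z s \<Longrightarrow> n \<le> m \<Longrightarrow> p \<in> cgens C (skP C d m) Z s"
  unfolding cgens_def using skP_mono by blast

lemma sk_incl_class:
  assumes Z: "presheaf C Z" and p: "p \<in> cgens C (skP C d n) Z s" and nm: "n \<le> m"
  shows "the_elem ((\<lambda>q. crelq C (skP C d m) Z s `` {q}) ` (crelq C (skP C d n) Z s `` {p}))
          = crelq C (skP C d m) Z s `` {p}"
proof (rule the_elem_class[OF crelq_equiv[OF Z] p])
  fix u v assume uv: "(u, v) \<in> crelq C (skP C d n) Z s"
  have uv': "u \<in> cgens C (skP C d n) Z s" "v \<in> cgens C (skP C d n) Z s" using crelq_in[OF Z uv] by auto
  have g: "u \<in> cgens C (skP C d m) Z s" "v \<in> cgens C (skP C d m) Z s"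
    using cgens_skP_mono[OF uv'(1) nm] cgens_skP_mono[OF uv'(2) nm] by auto
  obtain fu xu where u: "u = (fu, xu)" by (cases u)
  obtain fv xv where v: "v = (fv, xv)" by (cases v)
  have "ceval Z (crelq C (skP C d m) Z s `` {u}) = ceval Z (crelq C (skP C d m) Z s `` {v})"
    using ceval_class[OF Z] g crelq_val[OF Z uv] u v by simp
  then show "crelq C (skP C d m) Z s `` {u} = crelq C (skP C d m) Z s `` {v}"
    by (rule ceval_inj_on[OF Z factor_closed_skP class_in_ccolim[OF g(1)] class_in_ccolim[OF g(2)], unfolded ccolim_def])
qed

lemma sk_act_class:
  assumes Z: "presheaf C Z" and a: "a \<in> Ar C" and p: "(f, z) \<in> cgens C (skP C d n) Z (Cod C a)"
  shows "sk_act C (skP C d n) Z a (crelq C (skP C d n) Z (Cod C a) `` {(f, z)})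
          = crelq C (skP C d n) Z (Dom C a) `` {(Cmp C f a, z)}"
    and "(Cmp C f a, z) \<in> cgens C (skP C d n) Z (Dom C a)"
proof -
  have gen: "\<And>f z. (f, z) \<in> cgens C (skP C d n) Z (Cod C a) \<Longrightarrow> (Cmp C f a, z) \<in> cgens C (skP C d n) Z (Dom C a)"
    using a unfolding cgens_def skP_def by auto
  show "(Cmp C f a, z) \<in> cgens C (skP C d n) Z (Dom C a)" by (rule gen[OF p])
  show "sk_act C (skP C d n) Z a (crelq C (skP C d n) Z (Cod C a) `` {(f, z)})
          = crelq C (skP C d n) Z (Dom C a) `` {(Cmp C f a, z)}"
    unfolding sk_act_def
  proof (rule the_elem_class[OF crelq_equiv[OF Z] p, of "\<lambda>(f, y). crelq C (skP C d n) Z (Dom C a) `` {(Cmp C f a, y)}", simplified])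
    fix u v assume uv0: "(u, v) \<in> crelq C (skP C d n) Z (Cod C a)"
    obtain f1 z1 where u: "u = (f1, z1)" by (cases u)
    obtain f2 z2 where v: "v = (f2, z2)" by (cases v)
    have uv: "((f1, z1), (f2, z2)) \<in> crelq C (skP C d n) Z (Cod C a)" using uv0 u v by simp
    have g: "(f1, z1) \<in> cgens C (skP C d n) Z (Cod C a)" "(f2, z2) \<in> cgens C (skP C d n) Z (Cod C a)"
      using crelq_in[OF Z uv] by auto
    have g': "(Cmp C f1 a, z1) \<in> cgens C (skP C d n) Z (Dom C a)" "(Cmp C f2 a, z2) \<in> cgens C (skP C d n) Z (Dom C a)"
      using gen g by auto
    have e: "Act Z f1 z1 = Act Z f2 z2" using crelq_val[OF Z uv] by simp
    have "Act Z (Cmp C f1 a) z1 = Act Z (Cmp C f2 a) z2"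
      using act_cmp[OF Z a, of f1 z1] act_cmp[OF Z a, of f2 z2] g e unfolding cgens_def by auto
    then have "ceval Z (crelq C (skP C d n) Z (Dom C a) `` {(Cmp C f1 a, z1)}) =
               ceval Z (crelq C (skP C d n) Z (Dom C a) `` {(Cmp C f2 a, z2)})"
      using ceval_class[OF Z] g' by simp
    then have "crelq C (skP C d n) Z (Dom C a) `` {(Cmp C f1 a, z1)} = crelq C (skP C d n) Z (Dom C a) `` {(Cmp C f2 a, z2)}"
      by (rule ceval_inj_on[OF Z factor_closed_skP class_in_ccolim[OF g'(1)] class_in_ccolim[OF g'(2)], unfolded ccolim_def])
    then show "(case u of (f, y) \<Rightarrow> crelq C (skP C d n) Z (Dom C a) `` {(Cmp C f a, y)}) =
               (case v of (f, y) \<Rightarrow> crelq C (skP C d n) Z (Dom C a) `` {(Cmp C f a, y)})" using u v by simp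
  qed
qed

lemma nondegenerate_deg_le:
  assumes Z: "presheaf C Z" and y: "\<not> degenerate C Z r y" and f: "f \<in> Ar C" "Dom C f = r"
    and y': "y' \<in> El Z (Cod C f)" and eq: "y = Act Z f y'"
  shows "d r \<le> d (Cod C f)"
proof -
  obtain e m where em: "split_epi C e" "mono C m" "Cod C e = Dom C m" "f = Cmp C m e" using epi_mono_factorization f(1) by blast
  have eA: "e \<in> Ar C" and mA: "m \<in> Ar C" using em split_epi_ar mono_ar by auto
  have y2: "y = Act Z e (Act Z m y')" using eq em act_cmp[OF Z eA mA em(3)] y' eA mA by simp
  have my: "Act Z m y' \<in> El Z (Cod C e)" using act_el[OF Z mA] y' em eA mA by simp
  have "Dom C e = r" using f em eA mA by simp
  then have "iso C e" using split_epi_iso_of_nondegenerate[OF em(1) my] y y2 by simp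
  then have "d (Dom C e) = d (Cod C e)" using deg_iso by blast
  then show ?thesis using deg_mono[OF em(2)] em f eA mA by auto
qed

lemma not_bd_split_epi:
  assumes f: "f \<in> hom C s t" and nb: "f \<notin> bd C t s"
  shows "split_epi C f"
proof -
  have fA: "f \<in> Ar C" "Dom C f = s" "Cod C f = t" using f unfolding hom_def by auto
  obtain e m where em: "split_epi C e" "mono C m" "Cod C e = Dom C m" "f = Cmp C m e" using epi_mono_factorization fA(1) by blast
  have eA: "e \<in> Ar C" and mA: "m \<in> Ar C" using em split_epi_ar mono_ar by auto
  have "iso C m"
  proof (rule ccontr)
    assume "\<not> iso C m"
    moreover have "e \<in> hom C s (Dom C m)" using eA em fA mA unfolding hom_def by auto
    moreover have "Cod C m = t" using fA em eA mA by auto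
    ultimately have "f \<in> bd C t s" unfolding bd_def using f em by blast
    then show False using nb by blast
  qed
  then show ?thesis using split_epi_cmp[OF em(1) iso_split_epi] em by simp
qed

lemma not_bd_iso:
  assumes f: "f \<in> hom C s t" and nb: "f \<notin> bd C t s" and dd: "d s = d t"
  shows "iso C f"
proof -
  have fA: "f \<in> Ar C" "Dom C f = s" "Cod C f = t" using f unfolding hom_def by auto
  show ?thesis using deg_split_epi(2)[OF not_bd_split_epi[OF f nb]] fA dd by simp
qed

lemma sk_minus_one: "sk C d (-1) Z s = {}"
proof -
  have "cgens C (skP C d (-1)) Z s = {}" unfolding cgens_def skP_def by auto
  then show ?thesis unfolding sk_def ccolim_def by simp
qed

lemma bd_hom: "f \<in> bd C t s \<Longrightarrow> f \<in> hom C s t" unfolding bd_def by blast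

lemma bd_precomp:
  assumes f: "f \<in> bd C t s" and a: "a \<in> Ar C" "Cod C a = s"
  shows "Cmp C f a \<in> bd C t (Dom C a)"
proof -
  obtain m g where mg: "mono C m" "\<not> iso C m" "Cod C m = t" "g \<in> hom C s (Dom C m)" "f = Cmp C m g"
    and fh: "f \<in> hom C s t" using f unfolding bd_def by blast
  have mA: "m \<in> Ar C" using mg mono_ar by blast
  have gA: "g \<in> Ar C" "Dom C g = s" "Cod C g = Dom C m" using mg unfolding hom_def by auto
  have "Cmp C f a = Cmp C m (Cmp C g a)" unfolding mg(5) using mA gA a by (intro cmp_assoc[symmetric]) auto
  moreover have "Cmp C g a \<in> hom C (Dom C a) (Dom C m)" using gA a unfolding hom_def by auto
  moreover have "Cmp C f a \<in> hom C (Dom C a) t" using hom_precomp[OF fh a] .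
  ultimately show ?thesis unfolding bd_def using mg by blast
qed

end

context ez_map
begin


text \<open>The canonical map \<open>sk\<^sub>n(\<phi>)\<^sub>s \<rightarrow> Y\<^sub>s\<close>. It is injective once \<open>\<phi>\<close> is mono, so elements of relative
  skeleta can be handled through their images in \<open>Y\<close>.\<close>
definition relsk_eval :: "int \<Rightarrow> 'a \<Rightarrow> ('x + ('b \<times> 'y) set) set \<Rightarrow> 'y" where
  "relsk_eval n s K = the_elem (case_sum (\<phi> s) (ceval Y) ` K)"

abbreviation skrel where "skrel n s \<equiv> relsk_rel C d n X Y \<phi> s"

lemma skrel_def: "skrel n s = spo_rel (El X s) (sk C d n Y s) (sk C d n X s) (ceval X) (cmap C (skP C d n) Y \<phi> s)"
  unfolding relsk_rel_def ..

lemma relsk_legs: "\<forall>K\<in>sk C d n X s. ceval X K \<in> El X s \<and> cmap C (skP C d n) Y \<phi> s K \<in> sk C d n Y s"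
  unfolding sk_def using ceval_mem[OF X] cmap_mem[OF X Y phi] by blast

lemma relsk_square_commutes: "K \<in> sk C d n X s \<Longrightarrow> \<phi> s (ceval X K) = ceval Y (cmap C (skP C d n) Y \<phi> s K)"
  unfolding sk_def using ceval_cmap[OF X Y phi] by metis

lemma skrel_equiv: "equiv (El X s <+> sk C d n Y s) (skrel n s)"
  unfolding skrel_def by (rule spo_equiv[OF relsk_legs])

lemma relsk_eval_class: "u \<in> El X s <+> sk C d n Y s \<Longrightarrow> relsk_eval n s (skrel n s `` {u}) = case_sum (\<phi> s) (ceval Y) u"
  unfolding relsk_eval_def skrel_def
  by (rule spo_case_sum_class[where F="\<phi> s" and G="ceval Y", OF relsk_legs relsk_square_commutes])

lemma relskE: assumes "K \<in> relsk C d n X Y \<phi> s" obtains u where "u \<in> El X s <+> sk C d n Y s" "K = skrel n s `` {u}"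
  using spoE[OF assms[unfolded relsk_def]] unfolding skrel_def by blast

lemma relsk_classI: "u \<in> El X s <+> sk C d n Y s \<Longrightarrow> skrel n s `` {u} \<in> relsk C d n X Y \<phi> s"
  unfolding relsk_def skrel_def by (rule spo_classI)

lemma relsk_eval_image: "relsk_eval n s ` relsk C d n X Y \<phi> s = \<phi> s ` El X s \<union> ceval Y ` sk C d n Y s"
proof
  show "relsk_eval n s ` relsk C d n X Y \<phi> s \<subseteq> \<phi> s ` El X s \<union> ceval Y ` sk C d n Y s"
  proof
    fix y assume "y \<in> relsk_eval n s ` relsk C d n X Y \<phi> s"
    then obtain K where K: "K \<in> relsk C d n X Y \<phi> s" "y = relsk_eval n s K" by blast
    obtain u where u: "u \<in> El X s <+> sk C d n Y s" "K = skrel n s `` {u}" using relskE K(1) by blast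
    have "y = case_sum (\<phi> s) (ceval Y) u" using K u relsk_eval_class[OF u(1)] by simp
    then show "y \<in> \<phi> s ` El X s \<union> ceval Y ` sk C d n Y s" using u(1) by auto
  qed
  show "\<phi> s ` El X s \<union> ceval Y ` sk C d n Y s \<subseteq> relsk_eval n s ` relsk C d n X Y \<phi> s"
  proof
    fix y assume "y \<in> \<phi> s ` El X s \<union> ceval Y ` sk C d n Y s"
    then obtain u where u: "u \<in> El X s <+> sk C d n Y s" "y = case_sum (\<phi> s) (ceval Y) u"
    proof
      assume "y \<in> \<phi> s ` El X s"
      then obtain x where "x \<in> El X s" "y = \<phi> s x" by blast
      then show thesis using that[of "Inl x"] by auto
    next
      assume "y \<in> ceval Y ` sk C d n Y s"
      then obtain L where "L \<in> sk C d n Y s" "y = ceval Y L" by blast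
      then show thesis using that[of "Inr L"] by auto
    qed
    show "y \<in> relsk_eval n s ` relsk C d n X Y \<phi> s"
      using relsk_eval_class[OF u(1)] relsk_classI[OF u(1)] u(2) by force
  qed
qed

lemma ceval_sk_image_iff: "y \<in> ceval Y ` sk C d n Y s \<longleftrightarrow>
   (\<exists>f y'. f \<in> Ar C \<and> Dom C f = s \<and> int (d (Cod C f)) \<le> n \<and> y' \<in> El Y (Cod C f) \<and> y = Act Y f y')"
proof
  assume "y \<in> ceval Y ` sk C d n Y s"
  then obtain L where L: "L \<in> sk C d n Y s" "y = ceval Y L" by blast
  obtain f x where p: "(f, x) \<in> cgens C (skP C d n) Y s" "L = crelq C (skP C d n) Y s `` {(f, x)}"
    using ccolimE L(1) unfolding sk_def by blast
  have "y = Act Y f x" using L p ceval_class[OF Y p(1)] by simp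
  then show "\<exists>f y'. f \<in> Ar C \<and> Dom C f = s \<and> int (d (Cod C f)) \<le> n \<and> y' \<in> El Y (Cod C f) \<and> y = Act Y f y'"
    using p(1) unfolding cgens_def skP_def by blast
next
  assume "\<exists>f y'. f \<in> Ar C \<and> Dom C f = s \<and> int (d (Cod C f)) \<le> n \<and> y' \<in> El Y (Cod C f) \<and> y = Act Y f y'"
  then obtain f y' where f: "f \<in> Ar C" "Dom C f = s" "int (d (Cod C f)) \<le> n" "y' \<in> El Y (Cod C f)" "y = Act Y f y'"
    by blast
  have g: "(f, y') \<in> cgens C (skP C d n) Y s" using f unfolding cgens_def skP_def by auto
  show "y \<in> ceval Y ` sk C d n Y s"
    using class_in_ccolim[OF g] ceval_class[OF Y g] f(5) unfolding sk_def by force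
qed

lemma relsk_eval_inj:
  assumes mono: "psh_mono C X \<phi>" and s: "s \<in> Ob C"
  shows "inj_on (relsk_eval n s) (relsk C d n X Y \<phi> s)"
  unfolding relsk_eval_def relsk_def
proof (rule spo_case_sum_inj[where F="\<phi> s" and G="ceval Y", OF relsk_legs relsk_square_commutes])
  show "inj_on (\<phi> s) (El X s)" using mono s unfolding psh_mono_def by blast
  show "inj_on (ceval Y) (sk C d n Y s)" unfolding sk_def
    by (rule inj_onI) (rule ceval_inj_on[OF Y factor_closed_skP])
  fix x L assume "x \<in> El X s" "L \<in> sk C d n Y s" "\<phi> s x = ceval Y L"
  then show "\<exists>K\<in>sk C d n X s. x = ceval X K \<and> L = cmap C (skP C d n) Y \<phi> s K"
    using ccolim_lift[OF X Y phi mono factor_closed_skP s] unfolding sk_def by blast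
qed

definition sk_incl :: "int \<Rightarrow> 'a \<Rightarrow> ('b \<times> 'y) set \<Rightarrow> ('b \<times> 'y) set" where
  "sk_incl n s L = the_elem ((\<lambda>p. crelq C (skP C d n) Y s `` {p}) ` L)"

definition relsk_incl_rep :: "int \<Rightarrow> 'a \<Rightarrow> 'x + ('b \<times> 'y) set \<Rightarrow> 'x + ('b \<times> 'y) set" where
  "relsk_incl_rep n s u = (case u of Inl x \<Rightarrow> Inl x | Inr L \<Rightarrow> Inr (sk_incl n s L))"

lemma sk_incl_props:
  assumes L: "L \<in> sk C d (n - 1) Y s"
  shows "sk_incl n s L \<in> sk C d n Y s" "ceval Y (sk_incl n s L) = ceval Y L"
proof -
  obtain f y where p: "(f, y) \<in> cgens C (skP C d (n - 1)) Y s" "L = crelq C (skP C d (n - 1)) Y s `` {(f, y)}"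
    using ccolimE L unfolding sk_def by blast
  have g: "(f, y) \<in> cgens C (skP C d n) Y s" using cgens_skP_mono[OF p(1)] by simp
  have i: "sk_incl n s L = crelq C (skP C d n) Y s `` {(f, y)}"
    unfolding sk_incl_def p(2) by (rule sk_incl_class[OF Y p(1)]) simp
  show "sk_incl n s L \<in> sk C d n Y s" unfolding i sk_def by (rule class_in_ccolim[OF g])
  have "ceval Y (sk_incl n s L) = Act Y f y" unfolding i using ceval_class[OF Y g] .
  moreover have "ceval Y L = Act Y f y" unfolding p(2) using ceval_class[OF Y p(1)] .
  ultimately show "ceval Y (sk_incl n s L) = ceval Y L" by simp
qed

lemma relsk_incl_class:
  assumes u: "u \<in> El X s <+> sk C d (n - 1) Y s"
  shows "relsk_incl C d n X Y \<phi> s (skrel (n - 1) s `` {u}) = skrel n s `` {relsk_incl_rep n s u}"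
proof -
  have "relsk_incl C d n X Y \<phi> s (skrel (n - 1) s `` {u}) = the_elem ((\<lambda>u. skrel n s `` {relsk_incl_rep n s u}) ` (skrel (n - 1) s `` {u}))"
    unfolding relsk_incl_def relsk_incl_rep_def sk_incl_def ..
  also have "\<dots> = skrel n s `` {relsk_incl_rep n s u}"
    unfolding skrel_def[of "n - 1"]
  proof (rule spo_map_class[OF relsk_legs _ u, where \<Phi>="\<lambda>u. skrel n s `` {relsk_incl_rep n s u}"])
    fix K0 assume K0: "K0 \<in> sk C d (n - 1) X s"
    obtain f x where p: "(f, x) \<in> cgens C (skP C d (n - 1)) X s" "K0 = crelq C (skP C d (n - 1)) X s `` {(f, x)}"
      using ccolimE K0 unfolding sk_def by blast
    have g: "(f, x) \<in> cgens C (skP C d n) X s" using cgens_skP_mono[OF p(1)] by simp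
    have gy: "(f, \<phi> (Cod C f) x) \<in> cgens C (skP C d (n - 1)) Y s" using cgens_phi[OF phi p(1)] .
    define K1 where "K1 = crelq C (skP C d n) X s `` {(f, x)}"
    have K1: "K1 \<in> sk C d n X s" unfolding K1_def sk_def by (rule class_in_ccolim[OF g])
    have c1: "ceval X K1 = ceval X K0" unfolding K1_def p(2) using ceval_class[OF X g] ceval_class[OF X p(1)] by simp
    have c2: "cmap C (skP C d n) Y \<phi> s K1 = sk_incl n s (cmap C (skP C d (n - 1)) Y \<phi> s K0)"
      unfolding K1_def p(2) cmap_class[OF X Y phi g] cmap_class[OF X Y phi p(1)] sk_incl_def
      by (rule sk_incl_class[OF Y gy, symmetric]) simp
    have "(Inl (ceval X K1), Inr (cmap C (skP C d n) Y \<phi> s K1)) \<in> skrel n s"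
      unfolding skrel_def by (rule spo_related[OF K1])
    then have "skrel n s `` {Inl (ceval X K1)} = skrel n s `` {Inr (cmap C (skP C d n) Y \<phi> s K1)}"
      by (rule equiv_class_eq[OF skrel_equiv])
    then show "skrel n s `` {relsk_incl_rep n s (Inl (ceval X K0))} = skrel n s `` {relsk_incl_rep n s (Inr (cmap C (skP C d (n - 1)) Y \<phi> s K0))}"
      unfolding relsk_incl_rep_def using c1 c2 by simp
  qed
  finally show ?thesis .
qed

lemma relsk_incl_rep_mem: "u \<in> El X s <+> sk C d (n - 1) Y s \<Longrightarrow> relsk_incl_rep n s u \<in> El X s <+> sk C d n Y s"
  unfolding relsk_incl_rep_def using sk_incl_props(1) by (auto split: sum.splits)

lemma relsk_eval_incl:
  assumes K: "K \<in> relsk C d (n - 1) X Y \<phi> s"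
  shows "relsk_incl C d n X Y \<phi> s K \<in> relsk C d n X Y \<phi> s" "relsk_eval n s (relsk_incl C d n X Y \<phi> s K) = relsk_eval (n - 1) s K"
proof -
  obtain u where u: "u \<in> El X s <+> sk C d (n - 1) Y s" "K = skrel (n - 1) s `` {u}" using relskE K by blast
  show "relsk_incl C d n X Y \<phi> s K \<in> relsk C d n X Y \<phi> s"
    using relsk_incl_class[OF u(1)] u(2) relsk_classI[OF relsk_incl_rep_mem[OF u(1)]] by simp
  have "relsk_eval n s (relsk_incl C d n X Y \<phi> s K) = case_sum (\<phi> s) (ceval Y) (relsk_incl_rep n s u)"
    using relsk_incl_class[OF u(1)] u(2) relsk_eval_class[OF relsk_incl_rep_mem[OF u(1)]] by simp
  also have "\<dots> = case_sum (\<phi> s) (ceval Y) u"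
    using u(1) sk_incl_props(2) unfolding relsk_incl_rep_def by (auto split: sum.splits)
  also have "\<dots> = relsk_eval (n - 1) s K" using relsk_eval_class[OF u(1)] u(2) by simp
  finally show "relsk_eval n s (relsk_incl C d n X Y \<phi> s K) = relsk_eval (n - 1) s K" .
qed

definition relsk_act_rep :: "int \<Rightarrow> 'b \<Rightarrow> 'x + ('b \<times> 'y) set \<Rightarrow> 'x + ('b \<times> 'y) set" where
  "relsk_act_rep n a u = (case u of Inl x \<Rightarrow> Inl (Act X a x) | Inr L \<Rightarrow> Inr (sk_act C (skP C d n) Y a L))"

lemma sk_act_props:
  assumes a: "a \<in> Ar C" and L: "L \<in> sk C d n Y (Cod C a)"
  shows "sk_act C (skP C d n) Y a L \<in> sk C d n Y (Dom C a)"
    "ceval Y (sk_act C (skP C d n) Y a L) = Act Y a (ceval Y L)"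
proof -
  obtain f y where p: "(f, y) \<in> cgens C (skP C d n) Y (Cod C a)" "L = crelq C (skP C d n) Y (Cod C a) `` {(f, y)}"
    using ccolimE L unfolding sk_def by blast
  note sa = sk_act_class[OF Y a p(1)]
  show "sk_act C (skP C d n) Y a L \<in> sk C d n Y (Dom C a)"
    unfolding p(2) sa(1) sk_def by (rule class_in_ccolim[OF sa(2)])
  have f: "f \<in> Ar C" "Dom C f = Cod C a" "y \<in> El Y (Cod C f)" using p(1) unfolding cgens_def by auto
  show "ceval Y (sk_act C (skP C d n) Y a L) = Act Y a (ceval Y L)"
    unfolding p(2) sa(1) ceval_class[OF Y sa(2)] ceval_class[OF Y p(1)]
    using act_cmp[OF Y a f(1) f(2)[symmetric] f(3)] .
qed

lemma relsk_act_class: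
  assumes a: "a \<in> Ar C" and u: "u \<in> El X (Cod C a) <+> sk C d n Y (Cod C a)"
  shows "relsk_act C d n X Y \<phi> a (skrel n (Cod C a) `` {u}) = skrel n (Dom C a) `` {relsk_act_rep n a u}"
proof -
  have "relsk_act C d n X Y \<phi> a (skrel n (Cod C a) `` {u}) = the_elem ((\<lambda>u. skrel n (Dom C a) `` {relsk_act_rep n a u}) ` (skrel n (Cod C a) `` {u}))"
    unfolding relsk_act_def relsk_act_rep_def ..
  also have "\<dots> = skrel n (Dom C a) `` {relsk_act_rep n a u}"
    unfolding skrel_def[of n "Cod C a"]
  proof (rule spo_map_class[OF relsk_legs _ u, where \<Phi>="\<lambda>u. skrel n (Dom C a) `` {relsk_act_rep n a u}"])
    fix K0 assume K0: "K0 \<in> sk C d n X (Cod C a)"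
    obtain f x where p: "(f, x) \<in> cgens C (skP C d n) X (Cod C a)" "K0 = crelq C (skP C d n) X (Cod C a) `` {(f, x)}"
      using ccolimE K0 unfolding sk_def by blast
    have f: "f \<in> Ar C" "Dom C f = Cod C a" "x \<in> El X (Cod C f)" using p(1) unfolding cgens_def by auto
    note sa = sk_act_class[OF X a p(1)]
    have gy: "(f, \<phi> (Cod C f) x) \<in> cgens C (skP C d n) Y (Cod C a)" using cgens_phi[OF phi p(1)] .
    note say = sk_act_class[OF Y a gy]
    define K1 where "K1 = crelq C (skP C d n) X (Dom C a) `` {(Cmp C f a, x)}"
    have K1: "K1 \<in> sk C d n X (Dom C a)" unfolding K1_def sk_def by (rule class_in_ccolim[OF sa(2)])
    have c1: "ceval X K1 = Act X a (ceval X K0)" unfolding K1_def p(2) ceval_class[OF X sa(2)] ceval_class[OF X p(1)]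
      using act_cmp[OF X a f(1) f(2)[symmetric] f(3)] .
    have c2: "cmap C (skP C d n) Y \<phi> (Dom C a) K1 = sk_act C (skP C d n) Y a (cmap C (skP C d n) Y \<phi> (Cod C a) K0)"
      unfolding K1_def p(2) cmap_class[OF X Y phi sa(2)] cmap_class[OF X Y phi p(1)] say(1)
      using a f by simp
    have "(Inl (ceval X K1), Inr (cmap C (skP C d n) Y \<phi> (Dom C a) K1)) \<in> skrel n (Dom C a)"
      unfolding skrel_def by (rule spo_related[OF K1])
    then have "skrel n (Dom C a) `` {Inl (ceval X K1)} = skrel n (Dom C a) `` {Inr (cmap C (skP C d n) Y \<phi> (Dom C a) K1)}"
      by (rule equiv_class_eq[OF skrel_equiv])
    then show "skrel n (Dom C a) `` {relsk_act_rep n a (Inl (ceval X K0))} = skrel n (Dom C a) `` {relsk_act_rep n a (Inr (cmap C (skP C d n) Y \<phi> (Cod C a) K0))}"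
      unfolding relsk_act_rep_def using c1 c2 by simp
  qed
  finally show ?thesis .
qed

lemma relsk_act_rep_mem: "a \<in> Ar C \<Longrightarrow> u \<in> El X (Cod C a) <+> sk C d n Y (Cod C a) \<Longrightarrow> relsk_act_rep n a u \<in> El X (Dom C a) <+> sk C d n Y (Dom C a)"
  unfolding relsk_act_rep_def using sk_act_props(1) act_el[OF X] by (auto split: sum.splits)

lemma relsk_eval_act:
  assumes a: "a \<in> Ar C" and K: "K \<in> relsk C d n X Y \<phi> (Cod C a)"
  shows "relsk_act C d n X Y \<phi> a K \<in> relsk C d n X Y \<phi> (Dom C a)"
    "relsk_eval n (Dom C a) (relsk_act C d n X Y \<phi> a K) = Act Y a (relsk_eval n (Cod C a) K)"
proof -
  obtain u where u: "u \<in> El X (Cod C a) <+> sk C d n Y (Cod C a)" "K = skrel n (Cod C a) `` {u}" using relskE K by blast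
  show "relsk_act C d n X Y \<phi> a K \<in> relsk C d n X Y \<phi> (Dom C a)"
    using relsk_act_class[OF a u(1)] u(2) relsk_classI[OF relsk_act_rep_mem[OF a u(1)]] by simp
  have "relsk_eval n (Dom C a) (relsk_act C d n X Y \<phi> a K) = case_sum (\<phi> (Dom C a)) (ceval Y) (relsk_act_rep n a u)"
    using relsk_act_class[OF a u(1)] u(2) relsk_eval_class[OF relsk_act_rep_mem[OF a u(1)]] by simp
  also have "\<dots> = Act Y a (case_sum (\<phi> (Cod C a)) (ceval Y) u)"
  proof (cases u)
    case (Inl x)
    then have "x \<in> El X (Cod C a)" using u(1) by auto
    then show ?thesis using Inl phi a unfolding relsk_act_rep_def psh_map_def by auto
  next
    case (Inr L)
    then have "L \<in> sk C d n Y (Cod C a)" using u(1) by auto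
    then show ?thesis using Inr sk_act_props(2)[OF a] unfolding relsk_act_rep_def by auto
  qed
  also have "\<dots> = Act Y a (relsk_eval n (Cod C a) K)" using relsk_eval_class[OF u(1)] u(2) by simp
  finally show "relsk_eval n (Dom C a) (relsk_act C d n X Y \<phi> a K) = Act Y a (relsk_eval n (Cod C a) K)" .
qed

section \<open>Attaching cells\<close>

definition attaches_cells :: bool where
  "attaches_cells \<longleftrightarrow> (\<forall>n::nat.
           \<exists>(I :: ('a \<times> ('x + ('b \<times> 'y) set) set) set) \<rho> \<alpha> \<chi>.
             (\<forall>i\<in>I. \<rho> i \<in> Ob C \<and> d (\<rho> i) = n) \<and>
             (\<forall>s\<in>Ob C. \<forall>i\<in>I. \<forall>f\<in>bd C (\<rho> i) s.
                \<alpha> i f \<in> relsk C d (int n - 1) X Y \<phi> s \<and>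
                (\<forall>a\<in>Ar C. Cod C a = s \<longrightarrow>
                   \<alpha> i (Cmp C f a) = relsk_act C d (int n - 1) X Y \<phi> a (\<alpha> i f))) \<and>
             (\<forall>s\<in>Ob C. \<forall>i\<in>I. \<forall>f\<in>hom C s (\<rho> i).
                \<chi> i f \<in> relsk C d (int n) X Y \<phi> s \<and>
                (\<forall>a\<in>Ar C. Cod C a = s \<longrightarrow>
                   \<chi> i (Cmp C f a) = relsk_act C d (int n) X Y \<phi> a (\<chi> i f))) \<and>
             (\<forall>s\<in>Ob C. set_pushout
                {(i, f). i \<in> I \<and> f \<in> bd C (\<rho> i) s}
                (relsk C d (int n - 1) X Y \<phi> s)
                {(i, f). i \<in> I \<and> f \<in> hom C s (\<rho> i)}
                (relsk C d (int n) X Y \<phi> s)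
                (\<lambda>(i, f). \<alpha> i f) (\<lambda>p. p)
                (relsk_incl C d (int n) X Y \<phi> s) (\<lambda>(i, f). \<chi> i f)))"

definition cell_class :: "nat \<Rightarrow> 'a \<Rightarrow> 'y \<Rightarrow> ('x + ('b \<times> 'y) set) set" where
  "cell_class n r y = skrel (int n) r `` {Inr (crelq C (skP C d (int n)) Y r `` {(Idt C r, y)})}"

lemma cell_class_props:
  assumes r: "r \<in> Ob C" and y: "y \<in> El Y r" and n: "d r \<le> n"
  shows "cell_class n r y \<in> relsk C d (int n) X Y \<phi> r" "relsk_eval (int n) r (cell_class n r y) = y"
proof -
  have g: "(Idt C r, y) \<in> cgens C (skP C d (int n)) Y r" using r y n unfolding cgens_def skP_def by auto
  have "crelq C (skP C d (int n)) Y r `` {(Idt C r, y)} \<in> sk C d (int n) Y r"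
    unfolding sk_def by (rule class_in_ccolim[OF g])
  then have u: "Inr (crelq C (skP C d (int n)) Y r `` {(Idt C r, y)}) \<in> El X r <+> sk C d (int n) Y r" by auto
  show "cell_class n r y \<in> relsk C d (int n) X Y \<phi> r" unfolding cell_class_def by (rule relsk_classI[OF u])
  show "relsk_eval (int n) r (cell_class n r y) = y"
    unfolding cell_class_def using relsk_eval_class[OF u] ceval_class[OF Y g] r y Y by simp
qed

lemma relsk_Inl_class_eq_cell_class:
  assumes s: "s \<in> Ob C" and v: "v \<in> El X s" and n: "d s \<le> n"
  shows "skrel (int n) s `` {Inl v} = cell_class n s (\<phi> s v)"
proof -
  have g: "(Idt C s, v) \<in> cgens C (skP C d (int n)) X s" using s v n unfolding cgens_def skP_def by auto
  have K0: "crelq C (skP C d (int n)) X s `` {(Idt C s, v)} \<in> sk C d (int n) X s"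
    unfolding sk_def by (rule class_in_ccolim[OF g])
  have "(Inl (ceval X (crelq C (skP C d (int n)) X s `` {(Idt C s, v)})),
         Inr (cmap C (skP C d (int n)) Y \<phi> s (crelq C (skP C d (int n)) X s `` {(Idt C s, v)}))) \<in> skrel (int n) s"
    unfolding skrel_def by (rule spo_related[OF K0])
  then have "(Inl v, Inr (crelq C (skP C d (int n)) Y s `` {(Idt C s, \<phi> s v)})) \<in> skrel (int n) s"
    using ceval_class[OF X g] cmap_class[OF X Y phi g] s v X by simp
  then show ?thesis unfolding cell_class_def by (rule equiv_class_eq[OF skrel_equiv])
qed

lemma relsk_incl_Inl:
  "v \<in> El X s \<Longrightarrow> relsk_incl C d n X Y \<phi> s (skrel (n - 1) s `` {Inl v}) = skrel n s `` {Inl v}"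
  using relsk_incl_class[of "Inl v" s n] by (auto simp: relsk_incl_rep_def)

text \<open>Two elements with the same image in \<open>Y\<close> are identified in \<open>sk\<^sub>n(\<phi>)\<close> for \<open>n \<ge> d s\<close>; the attaching
  pushouts make each \<open>sk\<^sub>n\<^sub>-\<^sub>1(\<phi>) \<rightarrow> sk\<^sub>n(\<phi>)\<close> injective, so they are already equal in \<open>sk\<^sub>-\<^sub>1(\<phi>) = X\<close>.\<close>
lemma attaches_cells_mono:
  assumes cells: attaches_cells
  shows "psh_mono C X \<phi>"
  unfolding psh_mono_def
proof (intro ballI inj_onI)
  fix s x x' assume s: "s \<in> Ob C" and x: "x \<in> El X s" "x' \<in> El X s" and eq: "\<phi> s x = \<phi> s x'"
  define stage where "stage k v = skrel (int k - 1) s `` {Inl v}" for k :: nat and v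
  have step: "stage k x = stage k x'" if "stage (Suc k) x = stage (Suc k) x'" for k
  proof -
    obtain I :: "('a \<times> ('x + ('b \<times> 'y) set) set) set" and \<rho> \<alpha> \<chi> where sp: "set_pushout
                {(i, f). i \<in> I \<and> f \<in> bd C (\<rho> i) s}
                (relsk C d (int k - 1) X Y \<phi> s)
                {(i, f). i \<in> I \<and> f \<in> hom C s (\<rho> i)}
                (relsk C d (int k) X Y \<phi> s)
                (\<lambda>(i, f). \<alpha> i f) (\<lambda>p. p)
                (relsk_incl C d (int k) X Y \<phi> s) (\<lambda>(i, f). \<chi> i f)"
      using cells s unfolding attaches_cells_def by meson
    show ?thesis
    proof (rule set_pushout_h_inj[OF sp])
      show "stage k x \<in> relsk C d (int k - 1) X Y \<phi> s" "stage k x' \<in> relsk C d (int k - 1) X Y \<phi> s"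
        unfolding stage_def using relsk_classI x by auto
      show "relsk_incl C d (int k) X Y \<phi> s (stage k x) = relsk_incl C d (int k) X Y \<phi> s (stage k x')"
        using that relsk_incl_Inl[of _ s "int k"] x unfolding stage_def by simp
    qed simp
  qed
  have "stage (Suc k) x = stage (Suc k) x' \<Longrightarrow> stage 0 x = stage 0 x'" for k
    by (induction k) (use step in auto)
  moreover have "stage (Suc (d s)) x = stage (Suc (d s)) x'"
    using relsk_Inl_class_eq_cell_class[OF s] x eq unfolding stage_def by simp
  ultimately have "stage 0 x = stage 0 x'" by blast
  then have "(Inl x, Inl x') \<in> skrel (-1) s"
    unfolding stage_def using eq_equiv_class_iff[OF skrel_equiv, of "Inl x" s "-1" "Inl x'"] x by auto
  then show "x = x'" unfolding skrel_def spo_rel_def sk_minus_one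
    by (rule spo_inl_inj[rotated]) simp
qed

lemma relsk_eval_lower_ne:
  assumes r: "r \<in> Ob C" and y: "y \<in> El Y r - \<phi> r ` El X r" and nd: "\<not> degenerate C Y r y"
    and K: "K \<in> relsk C d (int (d r) - 1) X Y \<phi> r"
  shows "relsk_eval (int (d r) - 1) r K \<noteq> y"
proof
  assume eq: "relsk_eval (int (d r) - 1) r K = y"
  then have "y \<in> \<phi> r ` El X r \<union> ceval Y ` sk C d (int (d r) - 1) Y r" using relsk_eval_image K by blast
  then have "y \<in> ceval Y ` sk C d (int (d r) - 1) Y r" using y by blast
  then obtain f y' where f: "f \<in> Ar C" "Dom C f = r" "int (d (Cod C f)) \<le> int (d r) - 1" "y' \<in> El Y (Cod C f)" "y = Act Y f y'"
    unfolding ceval_sk_image_iff by blast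
  have "d r \<le> d (Cod C f)" by (rule nondegenerate_deg_le[OF Y nd f(1,2,4,5)])
  then show False using f(3) by linarith
qed

lemma new_nondegenerate_cell:
  assumes sp: "set_pushout
                {(i, f). i \<in> I \<and> f \<in> bd C (\<rho> i) r}
                (relsk C d (int (d r) - 1) X Y \<phi> r)
                {(i, f). i \<in> I \<and> f \<in> hom C r (\<rho> i)}
                (relsk C d (int (d r)) X Y \<phi> r)
                (\<lambda>(i, f). \<alpha> i f) (\<lambda>p. p)
                (relsk_incl C d (int (d r)) X Y \<phi> r) (\<lambda>(i, f). \<chi> i f)"
    and r: "r \<in> Ob C" and y: "y \<in> El Y r - \<phi> r ` El X r" and nd: "\<not> degenerate C Y r y"
  obtains i f where "i \<in> I" "f \<in> hom C r (\<rho> i)" "f \<notin> bd C (\<rho> i) r" "\<chi> i f = cell_class (d r) r y"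
proof -
  let ?K = "cell_class (d r) r y"
  note K = cell_class_props[OF r _ order_refl, of y]
  have not_incl: "relsk_incl C d (int (d r)) X Y \<phi> r K' \<noteq> ?K"
    if K': "K' \<in> relsk C d (int (d r) - 1) X Y \<phi> r" for K'
    using relsk_eval_incl[of K' "int (d r)" r] K' K y relsk_eval_lower_ne[OF r y nd K'] by auto
  have "?K \<in> (\<lambda>(i, f). \<chi> i f) ` {(i, f). i \<in> I \<and> f \<in> hom C r (\<rho> i)}"
    using set_pushout_jointly_surj[OF sp] K y not_incl by blast
  then obtain i f where i: "i \<in> I" "f \<in> hom C r (\<rho> i)" "\<chi> i f = ?K" by auto
  moreover have "f \<notin> bd C (\<rho> i) r"
  proof
    assume "f \<in> bd C (\<rho> i) r"
    then have "relsk_incl C d (int (d r)) X Y \<phi> r (\<alpha> i f) = \<chi> i f"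
      "\<alpha> i f \<in> relsk C d (int (d r) - 1) X Y \<phi> r"
      using set_pushout_commutes[OF sp, of "(i, f)"] i(1) by simp_all
    then show False using not_incl i(3) by blast
  qed
  ultimately show ?thesis using that by blast
qed

text \<open>A new nondegenerate \<open>y\<close> of degree \<open>n\<close> is hit only by a characteristic map \<open>\<chi> i f\<close> with \<open>f\<close> an
  isomorphism; an automorphism \<open>g\<close> fixing \<open>y\<close> fixes this element, and since the pushout is free on
  the cells outside the boundary, \<open>f \<circ> g = f\<close>.\<close>
lemma attaches_cells_trivial_isotropy:
  assumes cells: attaches_cells
  shows trivial_isotropy
  unfolding trivial_isotropy_def
proof (intro ballI impI)
  fix r y assume r: "r \<in> Ob C" and y: "y \<in> El Y r - \<phi> r ` El X r" and nd: "\<not> degenerate C Y r y"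
  obtain I :: "('a \<times> ('x + ('b \<times> 'y) set) set) set" and \<rho> \<alpha> \<chi> where
    rho: "\<forall>i\<in>I. \<rho> i \<in> Ob C \<and> d (\<rho> i) = d r" and
    chi: "\<forall>s\<in>Ob C. \<forall>i\<in>I. \<forall>f\<in>hom C s (\<rho> i).
                \<chi> i f \<in> relsk C d (int (d r)) X Y \<phi> s \<and>
                (\<forall>a\<in>Ar C. Cod C a = s \<longrightarrow>
                   \<chi> i (Cmp C f a) = relsk_act C d (int (d r)) X Y \<phi> a (\<chi> i f))" and
    sp: "\<forall>s\<in>Ob C. set_pushout
                {(i, f). i \<in> I \<and> f \<in> bd C (\<rho> i) s}
                (relsk C d (int (d r) - 1) X Y \<phi> s)
                {(i, f). i \<in> I \<and> f \<in> hom C s (\<rho> i)}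
                (relsk C d (int (d r)) X Y \<phi> s)
                (\<lambda>(i, f). \<alpha> i f) (\<lambda>p. p)
                (relsk_incl C d (int (d r)) X Y \<phi> s) (\<lambda>(i, f). \<chi> i f)"
    using cells[unfolded attaches_cells_def, rule_format, of "d r"] by blast
  note sp = sp[rule_format, OF r]
  obtain i f where i: "i \<in> I" "f \<in> hom C r (\<rho> i)" "f \<notin> bd C (\<rho> i) r" and
    Ky: "\<chi> i f = cell_class (d r) r y"
    using new_nondegenerate_cell[OF sp r y nd] by blast
  have K: "cell_class (d r) r y \<in> relsk C d (int (d r)) X Y \<phi> r"
    "relsk_eval (int (d r)) r (cell_class (d r) r y) = y"
    using cell_class_props[OF r _ order_refl] y by auto
  have fA: "f \<in> Ar C" "Dom C f = r" "Cod C f = \<rho> i" using i(2) unfolding hom_def by auto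
  have fiso: "iso C f" using not_bd_iso[OF i(2,3)] rho i(1) by simp
  have "g = Idt C r" if g: "g \<in> Aut C r" "Act Y g y = y" for g
  proof -
    have gA: "g \<in> Ar C" "Dom C g = r" "Cod C g = r" using g unfolding Aut_def hom_def by auto
    have "\<chi> i (Cmp C f g) = relsk_act C d (int (d r)) X Y \<phi> g (\<chi> i f)"
      using chi[rule_format, OF r i(1,2)] gA by blast
    also have "\<dots> = \<chi> i f"
    proof -
      note act = relsk_eval_act[OF gA(1), of "\<chi> i f" "int (d r)"]
      have "relsk_eval (int (d r)) r (relsk_act C d (int (d r)) X Y \<phi> g (\<chi> i f)) = relsk_eval (int (d r)) r (\<chi> i f)"
        using act(2) gA Ky K y g(2) by simp
      then show ?thesis
        by (rule inj_onD[OF relsk_eval_inj[OF attaches_cells_mono[OF cells] r]])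
          (use act(1) gA Ky K in simp_all)
    qed
    finally have "(i, f) = (i, Cmp C f g)"
      using set_pushout_k_free[OF sp, of "(i, f)" "(i, Cmp C f g)"] i hom_precomp[OF i(2) gA(1,3)] gA
      by auto
    then have fg: "Cmp C f g = f" by simp
    obtain f' where f': "f' \<in> Ar C" "Dom C f' = Cod C f" "Cod C f' = Dom C f"
     "Cmp C f' f = Idt C (Dom C f)" using iso_inv[OF fiso] by blast
    have "g = Cmp C f' (Cmp C f g)" using cmp_retraction_cancel[of f' f g] f' fA gA by simp
    then show ?thesis using fg f' fA by simp
  qed
  moreover have "Act Y (Idt C r) y = y" using Y r y by simp
  ultimately show "{g \<in> Aut C r. Act Y g y = y} = {Idt C r}" using Idt_in_Aut[OF r] by blast
qed

definition new_nondeg :: "nat \<Rightarrow> ('a \<times> 'y) set" where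
  "new_nondeg n = {(r, y). r \<in> Ob C \<and> d r = n \<and> y \<in> El Y r - \<phi> r ` El X r \<and> \<not> degenerate C Y r y}"

definition iso_orbit_rel :: "nat \<Rightarrow> (('a \<times> 'y) \<times> ('a \<times> 'y)) set" where
  "iso_orbit_rel n = {(p, q). p \<in> new_nondeg n \<and> q \<in> new_nondeg n \<and>
      (\<exists>g. iso C g \<and> Dom C g = fst p \<and> Cod C g = fst q \<and> snd p = Act Y g (snd q))}"

text \<open>One cell for each orbit of nondegenerate elements of degree \<open>n\<close> outside \<open>X\<close>, under the
  isomorphisms of \<open>\<^bold>R\<close>. A cell is recorded as its object \<open>r\<close> together with the class of its element in
  \<open>sk\<^sub>n(\<phi>)\<^sub>r\<close>, which fits the index type prescribed by condition (iii).\<close>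
definition orbit_rep :: "nat \<Rightarrow> 'a \<times> 'y \<Rightarrow> 'a \<times> 'y" where
  "orbit_rep n p = (SOME q. q \<in> iso_orbit_rel n `` {p})"

definition cells :: "nat \<Rightarrow> ('a \<times> ('x + ('b \<times> 'y) set) set) set" where
  "cells n = (\<lambda>p. (fst p, cell_class n (fst p) (snd p))) ` (orbit_rep n ` new_nondeg n)"

definition cell_elem :: "nat \<Rightarrow> 'a \<times> ('x + ('b \<times> 'y) set) set \<Rightarrow> 'y" where
  "cell_elem n i = relsk_eval (int n) (fst i) (snd i)"

text \<open>Attaching and characteristic maps are defined by inverting the injective \<open>relsk_eval\<close>;
  \<open>inv_into\<close> returns junk outside the image, which is why their properties need \<open>psh_mono C X \<phi>\<close>.\<close>
definition attach_map :: "nat \<Rightarrow> 'a \<times> ('x + ('b \<times> 'y) set) set \<Rightarrow> 'b \<Rightarrow> ('x + ('b \<times> 'y) set) set" where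
  "attach_map n i f = inv_into (relsk C d (int n - 1) X Y \<phi> (Dom C f)) (relsk_eval (int n - 1) (Dom C f)) (Act Y f (cell_elem n i))"

definition char_map :: "nat \<Rightarrow> 'a \<times> ('x + ('b \<times> 'y) set) set \<Rightarrow> 'b \<Rightarrow> ('x + ('b \<times> 'y) set) set" where
  "char_map n i f = inv_into (relsk C d (int n) X Y \<phi> (Dom C f)) (relsk_eval (int n) (Dom C f)) (Act Y f (cell_elem n i))"

lemma iso_orbit_rel_equiv: "equiv (new_nondeg n) (iso_orbit_rel n)"
proof (rule equivI)
  show "iso_orbit_rel n \<subseteq> new_nondeg n \<times> new_nondeg n" unfolding iso_orbit_rel_def by auto
  show "refl_on (new_nondeg n) (iso_orbit_rel n)" unfolding refl_on_def iso_orbit_rel_def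
  proof (intro ballI, clarify)
    fix r y assume p: "(r, y) \<in> new_nondeg n"
    then have r: "r \<in> Ob C" "y \<in> El Y r" unfolding new_nondeg_def by auto
    show "\<exists>g. iso C g \<and> Dom C g = fst (r, y) \<and> Cod C g = fst (r, y) \<and> snd (r, y) = Act Y g (snd (r, y))"
      using r idt_iso Y by (intro exI[of _ "Idt C r"]) auto
  qed
  show "sym (iso_orbit_rel n)" unfolding sym_def
  proof (intro allI impI)
    fix p q assume pq: "(p, q) \<in> iso_orbit_rel n"
    then obtain g where g: "iso C g" "Dom C g = fst p" "Cod C g = fst q" "snd p = Act Y g (snd q)"
      and N: "p \<in> new_nondeg n" "q \<in> new_nondeg n" unfolding iso_orbit_rel_def by blast
    obtain g' where g': "g' \<in> Ar C" "Dom C g' = Cod C g" "Cod C g' = Dom C g"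
     "Cmp C g' g = Idt C (Dom C g)" "Cmp C g g' = Idt C (Cod C g)" "iso C g'" using iso_inv[OF g(1)] by blast
    have gA: "g \<in> Ar C" using g iso_ar by blast
    have yq: "snd q \<in> El Y (fst q)" "fst q \<in> Ob C" using N unfolding new_nondeg_def by auto
    have "Act Y g' (snd p) = Act Y (Cmp C g g') (snd q)" using g act_cmp[OF Y g'(1) gA] g' yq by simp
    also have "\<dots> = snd q" using g' g yq Y gA by simp
    finally show "(q, p) \<in> iso_orbit_rel n" unfolding iso_orbit_rel_def using N g g' by auto
  qed
  show "trans (iso_orbit_rel n)" unfolding trans_def
  proof (intro allI impI)
    fix p q t assume pq: "(p, q) \<in> iso_orbit_rel n" and qt: "(q, t) \<in> iso_orbit_rel n"
    obtain g where g: "iso C g" "Dom C g = fst p" "Cod C g = fst q" "snd p = Act Y g (snd q)"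
      and N: "p \<in> new_nondeg n" "q \<in> new_nondeg n" using pq unfolding iso_orbit_rel_def by blast
    obtain h where h: "iso C h" "Dom C h = fst q" "Cod C h = fst t" "snd q = Act Y h (snd t)"
      and N': "t \<in> new_nondeg n" using qt unfolding iso_orbit_rel_def by blast
    have gA: "g \<in> Ar C" and hA: "h \<in> Ar C" using g h iso_ar by auto
    have yt: "snd t \<in> El Y (fst t)" using N' unfolding new_nondeg_def by auto
    have "snd p = Act Y (Cmp C h g) (snd t)" using g h act_cmp[OF Y gA hA] yt by simp
    moreover have "iso C (Cmp C h g)" using iso_cmp g h by simp
    ultimately show "(p, t) \<in> iso_orbit_rel n" unfolding iso_orbit_rel_def using N N' g h gA hA by auto
  qed
qed

lemma orbit_rep_rel: "p \<in> new_nondeg n \<Longrightarrow> (p, orbit_rep n p) \<in> iso_orbit_rel n"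
  unfolding orbit_rep_def using someI[of "\<lambda>q. q \<in> iso_orbit_rel n `` {p}" p] iso_orbit_rel_equiv
  by (metis Image_singleton_iff equiv_class_self)

lemma orbit_rep_eq: "(p, q) \<in> iso_orbit_rel n \<Longrightarrow> orbit_rep n p = orbit_rep n q"
  unfolding orbit_rep_def using equiv_class_eq[OF iso_orbit_rel_equiv] by metis

lemma orbit_rep_mem: "p \<in> new_nondeg n \<Longrightarrow> orbit_rep n p \<in> new_nondeg n"
  using orbit_rep_rel iso_orbit_rel_equiv unfolding iso_orbit_rel_def by blast

lemma orbit_rep_idem: "p \<in> new_nondeg n \<Longrightarrow> orbit_rep n (orbit_rep n p) = orbit_rep n p"
  using orbit_rep_eq[OF orbit_rep_rel] by metis

lemma cellsE:
  assumes "i \<in> cells n"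
  obtains r y where "i = (r, cell_class n r y)" "(r, y) \<in> new_nondeg n" "orbit_rep n (r, y) = (r, y)" "cell_elem n i = y"
proof -
  obtain p where p: "p \<in> new_nondeg n" "i = (fst (orbit_rep n p), cell_class n (fst (orbit_rep n p)) (snd (orbit_rep n p)))"
    using assms unfolding cells_def by blast
  obtain r y where ry: "orbit_rep n p = (r, y)" by (cases "orbit_rep n p")
  have N: "(r, y) \<in> new_nondeg n" using orbit_rep_mem[OF p(1)] ry by simp
  have "orbit_rep n (r, y) = (r, y)" using orbit_rep_idem[OF p(1)] ry by simp
  moreover have "cell_elem n i = y"
    using p(2) ry N cell_class_props(2)[of r y n] unfolding cell_elem_def new_nondeg_def by auto
  ultimately show ?thesis using that p ry N by simp
qed

lemma cells_facts:
  assumes i: "i \<in> cells n"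
  shows "fst i \<in> Ob C" "d (fst i) = n" "cell_elem n i \<in> El Y (fst i)" "cell_elem n i \<notin> \<phi> (fst i) ` El X (fst i)"
    "\<not> degenerate C Y (fst i) (cell_elem n i)"
proof -
  obtain r y where ir: "i = (r, cell_class n r y)" "(r, y) \<in> new_nondeg n" "cell_elem n i = y" using cellsE[OF i] by blast
  have N: "r \<in> Ob C" "d r = n" "y \<in> El Y r" "y \<notin> \<phi> r ` El X r" "\<not> degenerate C Y r y"
    using ir(2) unfolding new_nondeg_def by auto
  show "fst i \<in> Ob C" "d (fst i) = n" "cell_elem n i \<in> El Y (fst i)" "cell_elem n i \<notin> \<phi> (fst i) ` El X (fst i)"
    "\<not> degenerate C Y (fst i) (cell_elem n i)" using N ir by simp_all
qed

lemma bd_image_lower_sk: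
  assumes i: "i \<in> cells n" and f: "f \<in> bd C (fst i) s"
  shows "Act Y f (cell_elem n i) \<in> ceval Y ` sk C d (int n - 1) Y s"
proof -
  obtain m g where mg: "mono C m" "\<not> iso C m" "Cod C m = fst i" "g \<in> hom C s (Dom C m)" "f = Cmp C m g"
    using f unfolding bd_def by blast
  have mA: "m \<in> Ar C" using mg mono_ar by blast
  have gA: "g \<in> Ar C" "Dom C g = s" "Cod C g = Dom C m" using mg unfolding hom_def by auto
  have "d (Dom C m) < d (Cod C m)" using deg_mono[OF mg(1)] deg_mono_iso[OF mg(1)] mg(2) by linarith
  then have dl: "int (d (Cod C g)) \<le> int n - 1" using cells_facts(2)[OF i] mg(3) gA by simp
  have y: "cell_elem n i \<in> El Y (Cod C m)" using cells_facts(3)[OF i] mg(3) by simp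
  have my: "Act Y m (cell_elem n i) \<in> El Y (Cod C g)" using act_el[OF Y mA y] gA by simp
  have "Act Y f (cell_elem n i) = Act Y g (Act Y m (cell_elem n i))" using mg(5) act_cmp[OF Y gA(1) mA gA(3) y] by simp
  then show ?thesis unfolding ceval_sk_image_iff using gA dl my by blast
qed

lemma hom_image_sk:
  assumes i: "i \<in> cells n" and f: "f \<in> hom C s (fst i)"
  shows "Act Y f (cell_elem n i) \<in> ceval Y ` sk C d (int n) Y s"
proof -
  have fA: "f \<in> Ar C" "Dom C f = s" "Cod C f = fst i" using f unfolding hom_def by auto
  show ?thesis unfolding ceval_sk_image_iff using fA cells_facts(2,3)[OF i]
    by (intro exI[of _ f] exI[of _ "cell_elem n i"]) auto
qed

lemma not_bd_image_not_lower:
  assumes i: "i \<in> cells n" and f: "f \<in> hom C s (fst i)" and nb: "f \<notin> bd C (fst i) s"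
  shows "Act Y f (cell_elem n i) \<notin> \<phi> s ` El X s \<union> ceval Y ` sk C d (int n - 1) Y s"
proof
  assume A: "Act Y f (cell_elem n i) \<in> \<phi> s ` El X s \<union> ceval Y ` sk C d (int n - 1) Y s"
  have se: "split_epi C f" by (rule not_bd_split_epi[OF f nb])
  have fA: "f \<in> Ar C" "Dom C f = s" "Cod C f = fst i" using f unfolding hom_def by auto
  obtain \<sigma> where sg: "\<sigma> \<in> Ar C" "Dom C \<sigma> = Cod C f" "Cod C \<sigma> = Dom C f" "Cmp C f \<sigma> = Idt C (Cod C f)"
    using split_epi_section[OF se] by blast
  note yi = cells_facts[OF i]
  have bk: "Act Y \<sigma> (Act Y f (cell_elem n i)) = cell_elem n i"
  proof -
    have "Act Y \<sigma> (Act Y f (cell_elem n i)) = Act Y (Cmp C f \<sigma>) (cell_elem n i)" using act_cmp[OF Y sg(1) fA(1)] sg yi fA by simp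
    also have "\<dots> = cell_elem n i" using sg yi fA Y by simp
    finally show ?thesis .
  qed
  from A show False
  proof
    assume "Act Y f (cell_elem n i) \<in> \<phi> s ` El X s"
    then obtain x where x: "x \<in> El X s" "Act Y f (cell_elem n i) = \<phi> s x" by blast
    have "\<phi> (fst i) (Act X \<sigma> x) = Act Y \<sigma> (\<phi> s x)" using phi sg x fA unfolding psh_map_def by metis
    then have "cell_elem n i = \<phi> (fst i) (Act X \<sigma> x)" using bk x by simp
    moreover have "Act X \<sigma> x \<in> El X (fst i)" using act_el[OF X sg(1)] x sg fA by simp
    ultimately show False using yi(4) by blast
  next
    assume "Act Y f (cell_elem n i) \<in> ceval Y ` sk C d (int n - 1) Y s"
    then obtain h y' where h: "h \<in> Ar C" "Dom C h = s" "int (d (Cod C h)) \<le> int n - 1" "y' \<in> El Y (Cod C h)"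
      "Act Y f (cell_elem n i) = Act Y h y'" unfolding ceval_sk_image_iff by blast
    have "cell_elem n i = Act Y (Cmp C h \<sigma>) y'" using bk h act_cmp[OF Y sg(1) h(1)] sg fA by simp
    then have "d (fst i) \<le> d (Cod C (Cmp C h \<sigma>))"
      by (intro nondegenerate_deg_le[OF Y yi(5)]) (use h sg fA in auto)
    then show False using h sg fA yi(2) by simp
  qed
qed

lemma char_map_unique:
  assumes iso2: trivial_isotropy and i: "i \<in> cells n" and j: "j \<in> cells n"
    and f: "f \<in> hom C s (fst i)" "f \<notin> bd C (fst i) s"
    and f': "f' \<in> hom C s (fst j)" "f' \<notin> bd C (fst j) s"
    and eq: "Act Y f (cell_elem n i) = Act Y f' (cell_elem n j)"
  shows "i = j \<and> f = f'"
proof -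
  have se: "split_epi C f" "split_epi C f'" using not_bd_split_epi f f' by auto
  have fA: "f \<in> Ar C" "Dom C f = s" "Cod C f = fst i" "f' \<in> Ar C" "Dom C f' = s" "Cod C f' = fst j"
    using f f' unfolding hom_def by auto
  note yi = cells_facts[OF i] and yj = cells_facts[OF j]
  obtain g where g: "iso C g" "Dom C g = Cod C f" "Cod C g = Cod C f'" "Cmp C g f = f'" "cell_elem n i = Act Y g (cell_elem n j)"
  proof -
    have a1: "Dom C f = Dom C f'" using fA by simp
    have a2: "cell_elem n i \<in> El Y (Cod C f)" "\<not> degenerate C Y (Cod C f) (cell_elem n i)" using yi fA by auto
    have a3: "cell_elem n j \<in> El Y (Cod C f')" "\<not> degenerate C Y (Cod C f') (cell_elem n j)" using yj fA by auto
    show ?thesis using eilenberg_zilber_unique[OF Y se(1) se(2) a1 a2 a3 eq] that by blast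
  qed
  obtain ri yi' where ir: "i = (ri, cell_class n ri yi')" "(ri, yi') \<in> new_nondeg n" "orbit_rep n (ri, yi') = (ri, yi')" "cell_elem n i = yi'"
    using cellsE[OF i] by blast
  obtain rj yj' where jr: "j = (rj, cell_class n rj yj')" "(rj, yj') \<in> new_nondeg n" "orbit_rep n (rj, yj') = (rj, yj')" "cell_elem n j = yj'"
    using cellsE[OF j] by blast
  have "((ri, yi'), (rj, yj')) \<in> iso_orbit_rel n" unfolding iso_orbit_rel_def using ir jr g fA by auto
  then have "(ri, yi') = (rj, yj')" using orbit_rep_eq ir jr by metis
  then have ij: "i = j" using ir jr by simp
  have gaut: "g \<in> Aut C (fst i)" using g fA ij iso_ar unfolding Aut_def hom_def by auto
  have "Act Y g (cell_elem n i) = cell_elem n i" using g ij by simp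
  moreover have "cell_elem n i \<in> El Y (fst i) - \<phi> (fst i) ` El X (fst i)" using yi by blast
  ultimately have "g = Idt C (fst i)" using iso2 yi(1) yi(5) gaut unfolding trivial_isotropy_def by blast
  then have "f' = f" using g fA by simp
  then show ?thesis using ij by simp
qed

lemma attach_map_props:
  assumes i: "i \<in> cells n" and f: "f \<in> bd C (fst i) s"
  shows "attach_map n i f \<in> relsk C d (int n - 1) X Y \<phi> s" "relsk_eval (int n - 1) s (attach_map n i f) = Act Y f (cell_elem n i)"
proof -
  have ds: "Dom C f = s" using bd_hom[OF f] unfolding hom_def by auto
  have "Act Y f (cell_elem n i) \<in> relsk_eval (int n - 1) s ` relsk C d (int n - 1) X Y \<phi> s"
    unfolding relsk_eval_image using bd_image_lower_sk[OF i f] by blast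
  then show "attach_map n i f \<in> relsk C d (int n - 1) X Y \<phi> s" "relsk_eval (int n - 1) s (attach_map n i f) = Act Y f (cell_elem n i)"
    unfolding attach_map_def ds by (auto intro: inv_into_into f_inv_into_f)
qed

lemma char_map_props:
  assumes i: "i \<in> cells n" and f: "f \<in> hom C s (fst i)"
  shows "char_map n i f \<in> relsk C d (int n) X Y \<phi> s" "relsk_eval (int n) s (char_map n i f) = Act Y f (cell_elem n i)"
proof -
  have ds: "Dom C f = s" using f unfolding hom_def by auto
  have "Act Y f (cell_elem n i) \<in> relsk_eval (int n) s ` relsk C d (int n) X Y \<phi> s"
    unfolding relsk_eval_image using hom_image_sk[OF i f] by blast
  then show "char_map n i f \<in> relsk C d (int n) X Y \<phi> s" "relsk_eval (int n) s (char_map n i f) = Act Y f (cell_elem n i)"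
    unfolding char_map_def ds by (auto intro: inv_into_into f_inv_into_f)
qed

lemma bd_iff_lower:
  assumes i: "i \<in> cells n" and f: "f \<in> hom C s (fst i)"
  shows "f \<in> bd C (fst i) s \<longleftrightarrow> Act Y f (cell_elem n i) \<in> relsk_eval (int n - 1) s ` relsk C d (int n - 1) X Y \<phi> s"
  unfolding relsk_eval_image using bd_image_lower_sk[OF i] not_bd_image_not_lower[OF i f] by blast

lemma sk_new_element_nondegenerate_rep:
  assumes L: "L \<in> sk C d (int n) Y s"
    and new: "ceval Y L \<notin> \<phi> s ` El X s \<union> ceval Y ` sk C d (int n - 1) Y s"
  obtains e z where "split_epi C e" "Dom C e = s" "(Cod C e, z) \<in> new_nondeg n" "ceval Y L = Act Y e z"
proof -
  obtain e z where ez: "split_epi C e" "Dom C e = s" "skP C d (int n) e" "z \<in> El Y (Cod C e)"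
     "\<not> degenerate C Y (Cod C e) z" "L = crelq C (skP C d (int n)) Y s `` {(e, z)}"
     "(e, z) \<in> cgens C (skP C d (int n)) Y s"
    using ccolim_nondegenerate_repE[OF Y factor_closed_skP L[unfolded sk_def]] by blast
  have eA: "e \<in> Ar C" using ez split_epi_ar by blast
  have wz: "ceval Y L = Act Y e z" using ez(6) ceval_class[OF Y ez(7)] by simp
  have "d (Cod C e) = n"
  proof (rule ccontr)
    assume "d (Cod C e) \<noteq> n"
    then have "int (d (Cod C e)) \<le> int n - 1" using ez(3) unfolding skP_def by simp
    then have "ceval Y L \<in> ceval Y ` sk C d (int n - 1) Y s" unfolding ceval_sk_image_iff wz using eA ez by blast
    then show False using new by blast
  qed
  moreover have "z \<notin> \<phi> (Cod C e) ` El X (Cod C e)"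
  proof
    assume "z \<in> \<phi> (Cod C e) ` El X (Cod C e)"
    then obtain x where x: "x \<in> El X (Cod C e)" "z = \<phi> (Cod C e) x" by blast
    have "ceval Y L = \<phi> s (Act X e x)" using wz x phi eA ez unfolding psh_map_def by metis
    moreover have "Act X e x \<in> El X s" using act_el[OF X eA x(1)] ez by simp
    ultimately show False using new by blast
  qed
  ultimately have "(Cod C e, z) \<in> new_nondeg n" unfolding new_nondeg_def using eA ez by auto
  then show ?thesis using that ez(1,2) wz by blast
qed

lemma char_map_covers_new:
  assumes mono: "psh_mono C X \<phi>" and s: "s \<in> Ob C" and K: "K \<in> relsk C d (int n) X Y \<phi> s"
    and new: "relsk_eval (int n) s K \<notin> relsk_eval (int n - 1) s ` relsk C d (int n - 1) X Y \<phi> s"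
  obtains i f where "i \<in> cells n" "f \<in> hom C s (fst i)" "char_map n i f = K"
proof -
  define w where "w = relsk_eval (int n) s K"
  have "w \<in> relsk_eval (int n) s ` relsk C d (int n) X Y \<phi> s" unfolding w_def using K by (rule imageI)
  then have "w \<in> \<phi> s ` El X s \<union> ceval Y ` sk C d (int n) Y s" unfolding relsk_eval_image .
  moreover have wlow: "w \<notin> \<phi> s ` El X s \<union> ceval Y ` sk C d (int n - 1) Y s"
    using new unfolding w_def relsk_eval_image .
  ultimately obtain L where L: "L \<in> sk C d (int n) Y s" "w = ceval Y L" by blast
  obtain e z where ez: "split_epi C e" "Dom C e = s" and pN: "(Cod C e, z) \<in> new_nondeg n"
    and wz: "w = Act Y e z"
    using sk_new_element_nondegenerate_rep[OF L(1)] wlow L(2) by metis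
  have eA: "e \<in> Ar C" using ez split_epi_ar by blast
  define q where "q = orbit_rep n (Cod C e, z)"
  have "((Cod C e, z), q) \<in> iso_orbit_rel n" unfolding q_def by (rule orbit_rep_rel[OF pN])
  then obtain g where g: "iso C g" "Dom C g = Cod C e" "Cod C g = fst q" "z = Act Y g (snd q)"
    and qN: "q \<in> new_nondeg n" unfolding iso_orbit_rel_def by auto
  have gA: "g \<in> Ar C" using g iso_ar by blast
  define i where "i = (fst q, cell_class n (fst q) (snd q))"
  have iI: "i \<in> cells n" unfolding cells_def i_def q_def using pN by blast
  have qr: "fst q \<in> Ob C" "snd q \<in> El Y (fst q)" "d (fst q) = n"
    using qN unfolding new_nondeg_def by auto
  have yvi: "cell_elem n i = snd q"
    unfolding cell_elem_def i_def using cell_class_props(2)[OF qr(1,2)] qr(3) by simp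
  have fh: "Cmp C g e \<in> hom C s (fst i)" using gA eA g ez unfolding hom_def i_def by auto
  note c = char_map_props[OF iI fh]
  have sq: "snd q \<in> El Y (Cod C g)" using qN g unfolding new_nondeg_def by auto
  have "relsk_eval (int n) s (char_map n i (Cmp C g e)) = Act Y e (Act Y g (snd q))"
    using c(2) yvi act_cmp[OF Y eA gA _ sq] g by simp
  also have "\<dots> = w" using wz g by simp
  finally have "char_map n i (Cmp C g e) = K"
    using inj_onD[OF relsk_eval_inj[OF mono s] _ c(1) K] w_def by simp
  then show ?thesis by (rule that[OF iI fh])
qed

lemma relsk_incl_attach_map:
  assumes mono: "psh_mono C X \<phi>" and s: "s \<in> Ob C" and i: "i \<in> cells n" and f: "f \<in> bd C (fst i) s"
  shows "relsk_incl C d (int n) X Y \<phi> s (attach_map n i f) = char_map n i f"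
proof -
  note a = attach_map_props[OF i f] and c = char_map_props[OF i bd_hom[OF f]]
  note incl = relsk_eval_incl[of "attach_map n i f" "int n" s]
  show ?thesis
    by (rule inj_onD[OF relsk_eval_inj[OF mono s]]) (use incl a c in simp_all)
qed

lemma attach_map_eqI:
  assumes mono: "psh_mono C X \<phi>" and s: "s \<in> Ob C" and i: "i \<in> cells n" and f: "f \<in> bd C (fst i) s"
    and K: "K \<in> relsk C d (int n - 1) X Y \<phi> s"
    and eq: "relsk_eval (int n - 1) s K = Act Y f (cell_elem n i)"
  shows "attach_map n i f = K"
  by (rule inj_onD[OF relsk_eval_inj[OF mono s]]) (use attach_map_props[OF i f] K eq in simp_all)

lemma relsk_incl_char_map_jointly_surj:
  assumes mono: "psh_mono C X \<phi>" and s: "s \<in> Ob C" and K: "K \<in> relsk C d (int n) X Y \<phi> s"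
  shows "K \<in> relsk_incl C d (int n) X Y \<phi> s ` relsk C d (int n - 1) X Y \<phi> s \<union>
    (\<lambda>(i, f). char_map n i f) ` {(i, f). i \<in> cells n \<and> f \<in> hom C s (fst i)}"
proof (cases "relsk_eval (int n) s K \<in> relsk_eval (int n - 1) s ` relsk C d (int n - 1) X Y \<phi> s")
  case True
  then obtain K' where K': "K' \<in> relsk C d (int n - 1) X Y \<phi> s"
    "relsk_eval (int n) s K = relsk_eval (int n - 1) s K'" by blast
  note incl = relsk_eval_incl[of K' "int n" s]
  have "relsk_incl C d (int n) X Y \<phi> s K' = K"
    by (rule inj_onD[OF relsk_eval_inj[OF mono s]]) (use incl K K' in simp_all)
  then show ?thesis using K' by blast
next
  case False
  then obtain i f where "i \<in> cells n" "f \<in> hom C s (fst i)" "char_map n i f = K"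
    using char_map_covers_new[OF mono s K] by blast
  then show ?thesis by force
qed

lemma relsk_incl_eq_char_map:
  assumes mono: "psh_mono C X \<phi>" and s: "s \<in> Ob C" and K: "K \<in> relsk C d (int n - 1) X Y \<phi> s"
    and i: "i \<in> cells n" "f \<in> hom C s (fst i)"
    and eq: "relsk_incl C d (int n) X Y \<phi> s K = char_map n i f"
  shows "f \<in> bd C (fst i) s" "attach_map n i f = K"
proof -
  have e1: "relsk_eval (int n - 1) s K = Act Y f (cell_elem n i)"
    using relsk_eval_incl[of K "int n" s] K eq char_map_props(2)[OF i] by simp
  then show fb: "f \<in> bd C (fst i) s" using bd_iff_lower[OF i] K by (metis imageI)
  show "attach_map n i f = K" by (rule attach_map_eqI[OF mono s i(1) fb K e1])
qed

lemma char_map_eq_cases: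
  assumes mono: "psh_mono C X \<phi>" and triv: trivial_isotropy and s: "s \<in> Ob C"
    and i: "i \<in> cells n" "f \<in> hom C s (fst i)" and j: "j \<in> cells n" "f' \<in> hom C s (fst j)"
    and eq: "char_map n i f = char_map n j f'"
  shows "(i, f) = (j, f') \<or>
    f \<in> bd C (fst i) s \<and> f' \<in> bd C (fst j) s \<and> attach_map n i f = attach_map n j f'"
proof -
  have ev: "Act Y f (cell_elem n i) = Act Y f' (cell_elem n j)"
    using eq char_map_props(2)[OF i] char_map_props(2)[OF j] by simp
  then have bd_iff: "f \<in> bd C (fst i) s \<longleftrightarrow> f' \<in> bd C (fst j) s"
    using bd_iff_lower[OF i] bd_iff_lower[OF j] by simp
  show ?thesis
  proof (cases "f \<in> bd C (fst i) s")
    case True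
    then have fb': "f' \<in> bd C (fst j) s" using bd_iff by simp
    have "attach_map n j f' = attach_map n i f"
      using attach_map_eqI[OF mono s j(1) fb' attach_map_props(1)[OF i(1) True]]
        attach_map_props(2)[OF i(1) True] ev by simp
    then show ?thesis using True fb' by simp
  next
    case False
    then show ?thesis using char_map_unique[OF triv i(1) j(1) i(2) False j(2) _ ev] bd_iff by simp
  qed
qed

lemma cell_attachment_pushout:
  assumes mono: "psh_mono C X \<phi>" and triv: trivial_isotropy and s: "s \<in> Ob C"
  shows "set_pushout
                {(i, f). i \<in> cells n \<and> f \<in> bd C (fst i) s}
                (relsk C d (int n - 1) X Y \<phi> s)
                {(i, f). i \<in> cells n \<and> f \<in> hom C s (fst i)}
                (relsk C d (int n) X Y \<phi> s)
                (\<lambda>(i, f). attach_map n i f) (\<lambda>p. p)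
                (relsk_incl C d (int n) X Y \<phi> s) (\<lambda>(i, f). char_map n i f)"
proof -
  let ?A = "{(i, f). i \<in> cells n \<and> f \<in> bd C (fst i) s}" and ?B = "relsk C d (int n - 1) X Y \<phi> s"
    and ?C = "{(i, f). i \<in> cells n \<and> f \<in> hom C s (fst i)}" and ?D = "relsk C d (int n) X Y \<phi> s"
    and ?h = "relsk_incl C d (int n) X Y \<phi> s"
  have AC: "?A \<subseteq> ?C" using bd_hom by blast
  have comm: "\<forall>a\<in>?A. (\<lambda>(i, f). attach_map n i f) a \<in> ?B \<and>
      ?h ((\<lambda>(i, f). attach_map n i f) a) = (\<lambda>(i, f). char_map n i f) a"
    using attach_map_props(1) relsk_incl_attach_map[OF mono s] by auto
  have hB: "?h ` ?B \<subseteq> ?D" using relsk_eval_incl(1) by blast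
  have kC: "(\<lambda>(i, f). char_map n i f) ` ?C \<subseteq> ?D" using char_map_props(1) by auto
  have surj: "?D \<subseteq> ?h ` ?B \<union> (\<lambda>(i, f). char_map n i f) ` ?C"
    using relsk_incl_char_map_jointly_surj[OF mono s] by blast
  have inj: "inj_on ?h ?B"
  proof (rule inj_onI)
    fix K K' assume K: "K \<in> ?B" "K' \<in> ?B" and eq: "?h K = ?h K'"
    have "relsk_eval (int n - 1) s K = relsk_eval (int n - 1) s K'"
      using relsk_eval_incl[of K "int n" s] relsk_eval_incl[of K' "int n" s] K eq by simp
    then show "K = K'" using inj_onD[OF relsk_eval_inj[OF mono s]] K by blast
  qed
  have cross: "c \<in> ?A \<and> (\<lambda>(i, f). attach_map n i f) c = K"
    if "K \<in> ?B" "c \<in> ?C" "?h K = (\<lambda>(i, f). char_map n i f) c" for K c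
  proof -
    obtain i f where cif: "c = (i, f)" by (cases c)
    show ?thesis using that relsk_incl_eq_char_map[OF mono s, where K=K and i=i and f=f] unfolding cif by simp
  qed
  have overlap: "c = c' \<or> c \<in> ?A \<and> c' \<in> ?A \<and> (\<lambda>(i, f). attach_map n i f) c = (\<lambda>(i, f). attach_map n i f) c'"
    if "c \<in> ?C" "c' \<in> ?C" "(\<lambda>(i, f). char_map n i f) c = (\<lambda>(i, f). char_map n i f) c'" for c c'
  proof -
    obtain i f j f' where cc: "c = (i, f)" "c' = (j, f')" by (cases c, cases c')
    show ?thesis using that char_map_eq_cases[OF mono triv s, where i=i and f=f and j=j and f'=f'] unfolding cc by simp
  qed
  show ?thesis by (rule set_pushout_along_subset[OF AC comm hB kC surj inj cross overlap])
qed

lemma attach_map_natural: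
  assumes mono: "psh_mono C X \<phi>" and i: "i \<in> cells n" and f: "f \<in> bd C (fst i) s"
    and a: "a \<in> Ar C" "Cod C a = s"
  shows "attach_map n i (Cmp C f a) = relsk_act C d (int n - 1) X Y \<phi> a (attach_map n i f)"
proof -
  note p = attach_map_props[OF i f]
  have K: "attach_map n i f \<in> relsk C d (int n - 1) X Y \<phi> (Cod C a)" using p(1) a by simp
  note ea = relsk_eval_act[OF a(1) K]
  have fa: "Cmp C f a \<in> bd C (fst i) (Dom C a)" by (rule bd_precomp[OF f a])
  note p2 = attach_map_props[OF i fa]
  have fA: "f \<in> Ar C" "Dom C f = s" "Cod C f = fst i" using bd_hom[OF f] unfolding hom_def by auto
  have y: "cell_elem n i \<in> El Y (Cod C f)" using cells_facts(3)[OF i] fA by simp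
  have "relsk_eval (int n - 1) (Dom C a) (attach_map n i (Cmp C f a)) = Act Y a (Act Y f (cell_elem n i))"
    using p2(2) act_cmp[OF Y a(1) fA(1) _ y] a fA by simp
  also have "\<dots> = relsk_eval (int n - 1) (Dom C a) (relsk_act C d (int n - 1) X Y \<phi> a (attach_map n i f))"
    using ea(2) p(2) a by simp
  finally show ?thesis using inj_onD[OF relsk_eval_inj[OF mono ar_dom[OF a(1)]] _ p2(1) ea(1)] by simp
qed

lemma char_map_natural:
  assumes mono: "psh_mono C X \<phi>" and i: "i \<in> cells n" and f: "f \<in> hom C s (fst i)"
    and a: "a \<in> Ar C" "Cod C a = s"
  shows "char_map n i (Cmp C f a) = relsk_act C d (int n) X Y \<phi> a (char_map n i f)"
proof -
  note p = char_map_props[OF i f]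
  have K: "char_map n i f \<in> relsk C d (int n) X Y \<phi> (Cod C a)" using p(1) a by simp
  note ea = relsk_eval_act[OF a(1) K]
  have fa: "Cmp C f a \<in> hom C (Dom C a) (fst i)" by (rule hom_precomp[OF f a])
  note p2 = char_map_props[OF i fa]
  have fA: "f \<in> Ar C" "Dom C f = s" "Cod C f = fst i" using f unfolding hom_def by auto
  have y: "cell_elem n i \<in> El Y (Cod C f)" using cells_facts(3)[OF i] fA by simp
  have "relsk_eval (int n) (Dom C a) (char_map n i (Cmp C f a)) = Act Y a (Act Y f (cell_elem n i))"
    using p2(2) act_cmp[OF Y a(1) fA(1) _ y] a fA by simp
  also have "\<dots> = relsk_eval (int n) (Dom C a) (relsk_act C d (int n) X Y \<phi> a (char_map n i f))"
    using ea(2) p(2) a by simp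
  finally show ?thesis using inj_onD[OF relsk_eval_inj[OF mono ar_dom[OF a(1)]] _ p2(1) ea(1)] by simp
qed

lemma attaches_cells_of_trivial_isotropy:
  assumes mono: "psh_mono C X \<phi>" and triv: trivial_isotropy
  shows attaches_cells
  unfolding attaches_cells_def
proof
  fix n :: nat
  show "\<exists>(I :: ('a \<times> ('x + ('b \<times> 'y) set) set) set) \<rho> \<alpha> \<chi>.
             (\<forall>i\<in>I. \<rho> i \<in> Ob C \<and> d (\<rho> i) = n) \<and>
             (\<forall>s\<in>Ob C. \<forall>i\<in>I. \<forall>f\<in>bd C (\<rho> i) s.
                \<alpha> i f \<in> relsk C d (int n - 1) X Y \<phi> s \<and>
                (\<forall>a\<in>Ar C. Cod C a = s \<longrightarrow>
                   \<alpha> i (Cmp C f a) = relsk_act C d (int n - 1) X Y \<phi> a (\<alpha> i f))) \<and>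
             (\<forall>s\<in>Ob C. \<forall>i\<in>I. \<forall>f\<in>hom C s (\<rho> i).
                \<chi> i f \<in> relsk C d (int n) X Y \<phi> s \<and>
                (\<forall>a\<in>Ar C. Cod C a = s \<longrightarrow>
                   \<chi> i (Cmp C f a) = relsk_act C d (int n) X Y \<phi> a (\<chi> i f))) \<and>
             (\<forall>s\<in>Ob C. set_pushout
                {(i, f). i \<in> I \<and> f \<in> bd C (\<rho> i) s}
                (relsk C d (int n - 1) X Y \<phi> s)
                {(i, f). i \<in> I \<and> f \<in> hom C s (\<rho> i)}
                (relsk C d (int n) X Y \<phi> s)
                (\<lambda>(i, f). \<alpha> i f) (\<lambda>p. p)
                (relsk_incl C d (int n) X Y \<phi> s) (\<lambda>(i, f). \<chi> i f))"
  proof -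
    have "\<forall>i\<in>cells n. fst i \<in> Ob C \<and> d (fst i) = n"
      using cells_facts(1,2) by blast
    moreover have "\<forall>s\<in>Ob C. \<forall>i\<in>cells n. \<forall>f\<in>bd C (fst i) s.
                attach_map n i f \<in> relsk C d (int n - 1) X Y \<phi> s \<and>
                (\<forall>a\<in>Ar C. Cod C a = s \<longrightarrow>
                   attach_map n i (Cmp C f a) = relsk_act C d (int n - 1) X Y \<phi> a (attach_map n i f))"
      using attach_map_props(1) attach_map_natural[OF mono] by blast
    moreover have "\<forall>s\<in>Ob C. \<forall>i\<in>cells n. \<forall>f\<in>hom C s (fst i).
                char_map n i f \<in> relsk C d (int n) X Y \<phi> s \<and>
                (\<forall>a\<in>Ar C. Cod C a = s \<longrightarrow>
                   char_map n i (Cmp C f a) = relsk_act C d (int n) X Y \<phi> a (char_map n i f))"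
      using char_map_props(1) char_map_natural[OF mono] by blast
    ultimately show ?thesis
      using cell_attachment_pushout[OF mono triv]
      by (intro exI[of _ "cells n"] exI[of _ fst] exI[of _ "attach_map n"] exI[of _ "char_map n"] conjI) auto
  qed
qed

lemma mono_trivial_isotropy_iff_attaches_cells:
  "psh_mono C X \<phi> \<and> trivial_isotropy \<longleftrightarrow> attaches_cells"
  using attaches_cells_of_trivial_isotropy attaches_cells_mono attaches_cells_trivial_isotropy by blast

end

theorem proposition7p2:
  fixes C :: "('o,'m) cat" and d :: "'o \<Rightarrow> nat"
    and X :: "('o,'m,'x) psh" and Y :: "('o,'m,'y) psh" and \<phi> :: "'o \<Rightarrow> 'x \<Rightarrow> 'y"
  assumes "EZ_category C d" and "presheaf C X" and "presheaf C Y" and "psh_map C X Y \<phi>"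
  defines "cond_i \<equiv> (\<forall>r\<in>Ob C.
             free_ext (Aut C r) (Idt C r) (Act Y) (rel_latch_obj C X Y \<phi> r) (El Y r)
               (rel_latch_map Y \<phi> r))"
    and "cond_ii \<equiv> psh_mono C X \<phi> \<and>
           (\<forall>r\<in>Ob C. \<forall>y\<in>El Y r - \<phi> r ` El X r. \<not> degenerate C Y r y \<longrightarrow>
              {g \<in> Aut C r. Act Y g y = y} = {Idt C r})"
    and "cond_iii \<equiv> (\<forall>n::nat.
           \<exists>(I :: ('o \<times> ('x + ('m \<times> 'y) set) set) set) \<rho> \<alpha> \<chi>.
             (\<forall>i\<in>I. \<rho> i \<in> Ob C \<and> d (\<rho> i) = n) \<and>
             (\<forall>s\<in>Ob C. \<forall>i\<in>I. \<forall>f\<in>bd C (\<rho> i) s.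
                \<alpha> i f \<in> relsk C d (int n - 1) X Y \<phi> s \<and>
                (\<forall>a\<in>Ar C. Cod C a = s \<longrightarrow>
                   \<alpha> i (Cmp C f a) = relsk_act C d (int n - 1) X Y \<phi> a (\<alpha> i f))) \<and>
             (\<forall>s\<in>Ob C. \<forall>i\<in>I. \<forall>f\<in>hom C s (\<rho> i).
                \<chi> i f \<in> relsk C d (int n) X Y \<phi> s \<and>
                (\<forall>a\<in>Ar C. Cod C a = s \<longrightarrow>
                   \<chi> i (Cmp C f a) = relsk_act C d (int n) X Y \<phi> a (\<chi> i f))) \<and>
             (\<forall>s\<in>Ob C. set_pushout
                {(i, f). i \<in> I \<and> f \<in> bd C (\<rho> i) s}
                (relsk C d (int n - 1) X Y \<phi> s)
                {(i, f). i \<in> I \<and> f \<in> hom C s (\<rho> i)}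
                (relsk C d (int n) X Y \<phi> s)
                (\<lambda>(i, f). \<alpha> i f) (\<lambda>p. p)
                (relsk_incl C d (int n) X Y \<phi> s) (\<lambda>(i, f). \<chi> i f)))"
  shows "(cond_i \<longleftrightarrow> cond_ii) \<and> (cond_ii \<longleftrightarrow> cond_iii)"
proof -
  interpret ez_map C d X Y \<phi> by unfold_locales (rule assms)+
  have "cond_i \<longleftrightarrow> free_latching" unfolding cond_i_def free_latching_def ..
  moreover have "cond_ii \<longleftrightarrow> psh_mono C X \<phi> \<and> trivial_isotropy" unfolding cond_ii_def trivial_isotropy_def ..
  moreover have "cond_iii \<longleftrightarrow> attaches_cells" unfolding cond_iii_def attaches_cells_def ..
  ultimately show ?thesis
    using free_latching_iff_mono_trivial_isotropy mono_trivial_isotropy_iff_attaches_cells by blast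
qed

end
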